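(* Let $(X,b)$ be a weighted graph, let $F=(F_x)_{x\in X}$ be a Hermitian vector bundle over $X$, let $\Phi$ be a connection on $F$, and let $W$ be a self-adjoint bundle endomorphism on $F$. Assume: (1) $(X,b)$ is locally finite; (2) all connected components of $(X,b)$ are infinite; (3) the quadratic form $q_{W_{\min}}$ is nonnegative or the quadratic form $q_{-W_{\max}-2\deg}$ is nonnegative. Then the magnetic Schrödinger operator $\mathcal M=\mathcal M_{b,\Phi,W}\colon\Gamma(X;F)\to\Gamma(X;F)$ is surjective.
   Context: A weighted graph is a pair $(X,b)$ with $X$ countable and $b\colon X\times X\to[0,\infty)$ satisfying $b(x,x)=0$, $b(x,y)=b(y,x)$, and $\deg(x):=\sum_{y}b(x,y)<\infty$ for all $x,y$. Write $x\sim y$ if $b(x,y)>0$; $(X,b)$ is locally finite if each $x$ has finitely many $y$ with $b(x,y)>0$. Connected components are the equivalence classes of the relation "connected by a finite path $x_1\sim x_2\sim\dots\sim x_n$". For $V\colon X\to\mathbb R$, the form $q_V\colon C_c(X)\to\mathbb R$ (finitely supported complex functions) is $q_V(f)=\frac12\sum_{x,y}b(x,y)|f(x)-f(y)|^2+\sum_x|f(x)|^2V(x)$; it is nonnegative if $q_V(f)\ge0$ for all $f\in C_c(X)$. A Hermitian vector bundle is a family $F=(F_x)_{x\in X}$ of finite-dimensional complex inner product spaces; $\Gamma(X;F)=\prod_x F_x$. A connection is a family of unitary maps $\Phi_{xy}\colon F_y\to F_x$ with $\Phi_{yx}=\Phi_{xy}^{-1}$. A self-adjoint bundle endomorphism is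 a family of self-adjoint linear maps $W(x)\colon F_x\to F_x$; $W_{\min}(x)$ and $W_{\max}(x)$ denote the smallest and largest eigenvalues of $W(x)$. For locally finite $(X,b)$, $\mathcal M f(x)=\sum_{y}b(x,y)(f(x)-\Phi_{xy}f(y))+W(x)f(x)$ for $f\in\Gamma(X;F)$. *)

theory Defs
  imports "HOL-Analysis.Analysis" "Jordan_Normal_Form.Schur_Decomposition"
begin

definition weighted_graph :: "('x::countable \<Rightarrow> 'x \<Rightarrow> real) \<Rightarrow> bool" where
  "weighted_graph b \<longleftrightarrow> (\<forall>x y. b x y \<ge> 0) \<and> (\<forall>x. b x x = 0) \<and> (\<forall>x y. b x y = b y x)
     \<and> (\<forall>x. (\<lambda>y. b x y) summable_on UNIV)"

definition deg :: "('x \<Rightarrow> 'x \<Rightarrow> real) \<Rightarrow> 'x \<Rightarrow> real" where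
  "deg b x = (\<Sum>\<^sub>\<infinity>y. b x y)"

definition locally_finite :: "('x \<Rightarrow> 'x \<Rightarrow> real) \<Rightarrow> bool" where
  "locally_finite b \<longleftrightarrow> (\<forall>x. finite {y. b x y > 0})"

definition edges :: "('x \<Rightarrow> 'x \<Rightarrow> real) \<Rightarrow> ('x \<times> 'x) set" where
  "edges b = {(x, y). b x y > 0}"

definition component :: "('x \<Rightarrow> 'x \<Rightarrow> real) \<Rightarrow> 'x \<Rightarrow> 'x set" where
  "component b x = {y. (x, y) \<in> (edges b)\<^sup>*}"

definition qform :: "('x \<Rightarrow> 'x \<Rightarrow> real) \<Rightarrow> ('x \<Rightarrow> real) \<Rightarrow> ('x \<Rightarrow> complex) \<Rightarrow> real" where
  "qform b V f = (\<Sum>\<^sub>\<infinity>(x, y). b x y * (cmod (f x - f y))\<^sup>2) / 2 + (\<Sum>\<^sub>\<infinity>x. (cmod (f x))\<^sup>2 * V x)"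

definition qform_nonneg :: "('x \<Rightarrow> 'x \<Rightarrow> real) \<Rightarrow> ('x \<Rightarrow> real) \<Rightarrow> bool" where
  "qform_nonneg b V \<longleftrightarrow> (\<forall>f. finite {x. f x \<noteq> 0} \<longrightarrow> qform b V f \<ge> 0)"

text \<open>Hermitian bundle: fibre F_x = complex vectors of dimension d x with the standard inner product.
  Sections Gamma(X;F).\<close>
definition sections :: "('x \<Rightarrow> nat) \<Rightarrow> ('x \<Rightarrow> complex vec) set" where
  "sections d = {f. \<forall>x. f x \<in> carrier_vec (d x)}"

definition unitary_map :: "complex mat \<Rightarrow> nat \<Rightarrow> nat \<Rightarrow> bool" where
  "unitary_map U m n \<longleftrightarrow> U \<in> carrier_mat m n \<and> mat_adjoint U * U = 1\<^sub>m n \<and> U * mat_adjoint U = 1\<^sub>m m"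

definition connection :: "('x \<Rightarrow> 'x \<Rightarrow> real) \<Rightarrow> ('x \<Rightarrow> nat) \<Rightarrow> ('x \<Rightarrow> 'x \<Rightarrow> complex mat) \<Rightarrow> bool" where
  "connection b d \<Phi> \<longleftrightarrow> (\<forall>x y. b x y > 0 \<longrightarrow> unitary_map (\<Phi> x y) (d x) (d y)
      \<and> \<Phi> y x * \<Phi> x y = 1\<^sub>m (d y) \<and> \<Phi> x y * \<Phi> y x = 1\<^sub>m (d x))"

definition selfadjoint_endo :: "('x \<Rightarrow> nat) \<Rightarrow> ('x \<Rightarrow> complex mat) \<Rightarrow> bool" where
  "selfadjoint_endo d W \<longleftrightarrow> (\<forall>x. W x \<in> carrier_mat (d x) (d x) \<and> mat_adjoint (W x) = W x)"

definition Wmin :: "('x \<Rightarrow> complex mat) \<Rightarrow> 'x \<Rightarrow> real" where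
  "Wmin W x = Min {l::real. eigenvalue (W x) (complex_of_real l)}"

definition Wmax :: "('x \<Rightarrow> complex mat) \<Rightarrow> 'x \<Rightarrow> real" where
  "Wmax W x = Max {l::real. eigenvalue (W x) (complex_of_real l)}"

text \<open>Magnetic Schroedinger operator (for locally finite graphs).\<close>
definition magnetic_op :: "('x \<Rightarrow> 'x \<Rightarrow> real) \<Rightarrow> ('x \<Rightarrow> nat) \<Rightarrow> ('x \<Rightarrow> 'x \<Rightarrow> complex mat)
    \<Rightarrow> ('x \<Rightarrow> complex mat) \<Rightarrow> ('x \<Rightarrow> complex vec) \<Rightarrow> 'x \<Rightarrow> complex vec" where
  "magnetic_op b d \<Phi> W f x =
     vec (d x) (\<lambda>i. \<Sum>y\<in>{y. b x y > 0}. complex_of_real (b x y) * (f x $ i - (\<Phi> x y *\<^sub>v f y) $ i))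
     + W x *\<^sub>v f x"

end

theory Submission
  imports Defs "HOL-Library.Function_Algebras"
begin

text \<open>Flattening the fibres turns \<open>\<M>\<close> into a scalar kernel \<open>K\<close> on pairs \<open>(x, i)\<close> that is
  locally finite and Hermitian. Such a kernel is surjective as soon as it is injective on
  finitely supported functions: on every finite set the equation is solvable by
  finite-dimensional linear algebra, the traces of these local solutions on a fixed finite
  window form a decreasing chain of affine spaces of finite dimension, which stabilises, and
  a coherent choice of stable traces glues to a global solution (Mittag-Leffler).

  For injectivity let \<open>\<M>f = 0\<close> with \<open>f\<close> finitely supported and \<open>u = |f|\<close>. Pairing
  \<open>(\<M>f)(x)\<close> with \<open>f(x)\<close>, the bounds \<open>|Re \<langle>\<Phi>\<^sub>x\<^sub>y f(y), f(x)\<rangle>| \<le> u(x) u(y)\<close> and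
  \<open>W\<^sub>m\<^sub>i\<^sub>n |v|\<^sup>2 \<le> \<langle>Wv, v\<rangle> \<le> W\<^sub>m\<^sub>a\<^sub>x |v|\<^sup>2\<close> give \<open>q\<^sub>V(u) \<le> 0\<close> for
  \<open>V = W\<^sub>m\<^sub>i\<^sub>n\<close> and for \<open>V = -W\<^sub>m\<^sub>a\<^sub>x - 2 deg\<close>. When \<open>q\<^sub>V \<ge> 0\<close>, \<open>u\<close> is then a
  minimiser of \<open>q\<^sub>V\<close> and vanishes next to each of its zeros; as all components are
  infinite, a nonempty finite support would have an edge leaving it, so \<open>f = 0\<close>.\<close>

section \<open>Dimension arguments in vector spaces\<close>

context vector_space
begin

lemma independent_card_le_dim_of_finite_span:
  assumes "independent I" "I \<subseteq> V" "V \<subseteq> span S" "finite S"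
  shows "finite I \<and> card I \<le> dim V"
proof -
  obtain B where B: "B \<subseteq> V" "independent B" "V \<subseteq> span B" "card B = dim V"
    by (rule basis_exists)
  have "finite B"
    using independent_span_bound[OF assms(4) B(2)] B(1) assms(3) by auto
  then show ?thesis
    using independent_span_bound[OF \<open>finite B\<close> assms(1)] assms(2) B by auto
qed

lemma dim_mono_of_finite_span:
  assumes "U \<subseteq> V" "V \<subseteq> span S" "finite S"
  shows "dim U \<le> dim V"
proof -
  obtain B where "B \<subseteq> U" "independent B" "U \<subseteq> span B" "card B = dim U"
    by (rule basis_exists)
  then show ?thesis
    using independent_card_le_dim_of_finite_span[of B V S] assms by auto
qed

lemma subspace_eq_of_dim_eq:
  assumes "subspace U" "U \<subseteq> V" "V \<subseteq> span S" "finite S" "dim U = dim V"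
  shows "U = V"
proof (rule ccontr)
  assume "U \<noteq> V"
  then obtain v where v: "v \<in> V" "v \<notin> U"
    using assms(2) by auto
  obtain B where B: "B \<subseteq> U" "independent B" "U \<subseteq> span B" "card B = dim U"
    by (rule basis_exists)
  have "span B = U"
    using B assms(1) span_minimal[of B U] by auto
  have "finite B"
    using independent_card_le_dim_of_finite_span[OF B(2) _ assms(3,4)] B(1) assms(2) by auto
  have "independent (insert v B)"
    using independent_insertI[of v B] v \<open>span B = U\<close> B by auto
  then have "card (insert v B) \<le> dim V"
    using independent_card_le_dim_of_finite_span[of "insert v B" V S] B v assms by auto
  moreover have "card (insert v B) = Suc (card B)"
    using \<open>finite B\<close> v B by (metis card_insert_disjoint subsetD)
  ultimately show False
    using B assms by auto
qed

lemma decreasing_subspaces_stabilize: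
  fixes U :: "nat \<Rightarrow> 'b set"
  assumes "\<And>k. subspace (U k)" "\<And>k k'. k \<le> k' \<Longrightarrow> U k' \<subseteq> U k"
    and "\<And>k. U k \<subseteq> span S" "finite S"
  shows "\<exists>M. \<forall>k\<ge>M. U k = U M"
proof -
  obtain M where M: "\<And>k. dim (U M) \<le> dim (U k)"
    using ex_has_least_nat[of "\<lambda>_. True" 0 "\<lambda>k. dim (U k)"] by blast
  have "U k = U M" if "M \<le> k" for k
  proof (rule subspace_eq_of_dim_eq[OF assms(1) assms(2)[OF that] _ assms(4)])
    show "U M \<subseteq> span S"
      by (rule assms(3))
    show "dim (U k) = dim (U M)"
      using M[of k] dim_mono_of_finite_span[OF assms(2)[OF that] assms(3,4)] by simp
  qed
  then show ?thesis
    by blast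
qed

lemma linear_inj_on_imp_surj_on:
  assumes "Vector_Spaces.linear scale scale T" "subspace V" "V \<subseteq> span S" "finite S"
    and "T ` V \<subseteq> V" "inj_on T V"
  shows "T ` V = V"
proof -
  interpret T: Vector_Spaces.linear scale scale T by fact
  obtain B where B: "B \<subseteq> V" "independent B" "V \<subseteq> span B" "card B = dim V"
    by (rule basis_exists)
  have "span B = V"
    using B assms(2) span_minimal[of B V] by auto
  then have "span (T ` B) = T ` V"
    using T.span_image by auto
  have "independent (T ` B)"
    using T.independent_injective_image[OF B(2)] \<open>span B = V\<close> assms(6) by auto
  moreover have "card (T ` B) = card B"
    using card_image[of T B] assms(6) B(1) inj_on_subset by blast
  ultimately have "dim (T ` V) = dim V"
    using dim_eq_card_independent \<open>span (T ` B) = T ` V\<close> B(4) by (metis dim_span)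
  moreover have "subspace (T ` V)"
    using \<open>span (T ` B) = T ` V\<close> by (metis subspace_span)
  ultimately show ?thesis
    using subspace_eq_of_dim_eq assms(3-5) by blast
qed

end

section \<open>Locally finite Hermitian kernels\<close>

definition cscale :: "complex \<Rightarrow> ('p \<Rightarrow> complex) \<Rightarrow> 'p \<Rightarrow> complex" where
  "cscale c f = (\<lambda>p. c * f p)"

interpretation cfun: vector_space "cscale :: complex \<Rightarrow> ('p \<Rightarrow> complex) \<Rightarrow> _"
  by unfold_locales (auto simp: cscale_def fun_eq_iff algebra_simps)

definition supported_on :: "'p set \<Rightarrow> ('p \<Rightarrow> complex) set" where
  "supported_on A = {h. \<forall>p. p \<notin> A \<longrightarrow> h p = 0}"

definition zero_outside :: "'p set \<Rightarrow> ('p \<Rightarrow> complex) \<Rightarrow> 'p \<Rightarrow> complex" where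
  "zero_outside A f = (\<lambda>p. if p \<in> A then f p else 0)"

lemma zero_outside_supported_on: "zero_outside A f \<in> supported_on A"
  by (simp add: zero_outside_def supported_on_def)

lemma supported_on_subspace: "cfun.subspace (supported_on A)"
  by (auto simp: cfun.subspace_def supported_on_def cscale_def)

lemma sum_fun_apply: "(sum f A) x = (\<Sum>a\<in>A. f a x)"
  by (induction A rule: infinite_finite_induct) auto

lemma supported_on_finite_span:
  assumes "finite A"
  shows "supported_on A \<subseteq> cfun.span ((\<lambda>p q. if q = p then 1 else 0) ` A)"
proof
  fix h assume h: "h \<in> supported_on A"
  have "h = (\<Sum>p\<in>A. cscale (h p) (\<lambda>q. if q = p then 1 else 0))"
    using assms h by (auto simp: fun_eq_iff sum_fun_apply cscale_def supported_on_def if_distrib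
        cong: if_cong)
  also have "\<dots> \<in> cfun.span ((\<lambda>p q. if q = p then 1 else 0) ` A)"
    by (intro cfun.span_sum cfun.span_scale cfun.span_base) auto
  finally show "h \<in> cfun.span ((\<lambda>p q. if q = p then 1 else 0) ` A)" .
qed

definition kernel_supp :: "('p \<Rightarrow> 'p \<Rightarrow> complex) \<Rightarrow> 'p \<Rightarrow> 'p set" where
  "kernel_supp m p = {q. m p q \<noteq> 0}"

definition kernel_apply :: "('p \<Rightarrow> 'p \<Rightarrow> complex) \<Rightarrow> ('p \<Rightarrow> complex) \<Rightarrow> 'p \<Rightarrow> complex" where
  "kernel_apply m f = (\<lambda>p. \<Sum>q\<in>kernel_supp m p. m p q * f q)"

lemma kernel_apply_eq_sum:
  "finite C \<Longrightarrow> kernel_supp m p \<subseteq> C \<Longrightarrow> kernel_apply m f p = (\<Sum>q\<in>C. m p q * f q)"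
  unfolding kernel_apply_def by (rule sum.mono_neutral_left) (auto simp: kernel_supp_def)

lemma kernel_apply_add: "kernel_apply m (f + g) = kernel_apply m f + kernel_apply m g"
  by (simp add: kernel_apply_def fun_eq_iff sum.distrib algebra_simps)

lemma kernel_apply_diff: "kernel_apply m (f - g) = kernel_apply m f - kernel_apply m g"
  by (simp add: kernel_apply_def fun_eq_iff sum_subtractf algebra_simps)

lemma kernel_apply_cscale: "kernel_apply m (cscale c f) = cscale c (kernel_apply m f)"
  by (simp add: kernel_apply_def cscale_def fun_eq_iff sum_distrib_left algebra_simps)

lemma kernel_apply_zero: "kernel_apply m 0 = 0"
  by (simp add: kernel_apply_def fun_eq_iff)

lemma kernel_apply_cong:
  "(\<And>q. q \<in> kernel_supp m p \<Longrightarrow> f q = f' q) \<Longrightarrow> kernel_apply m f p = kernel_apply m f' p"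
  unfolding kernel_apply_def by (rule sum.cong) auto

definition initial_segment :: "nat \<Rightarrow> 'p::countable set" where
  "initial_segment k = {p. to_nat p < k}"

lemma finite_initial_segment: "finite (initial_segment k)"
proof -
  have "initial_segment k = to_nat -` {..<k}"
    by (auto simp: initial_segment_def)
  then show ?thesis
    by (metis finite_lessThan finite_vimageI inj_to_nat)
qed

lemma initial_segment_mono: "k \<le> k' \<Longrightarrow> initial_segment k \<subseteq> initial_segment k'"
  by (auto simp: initial_segment_def)

lemma mem_initial_segment_Suc_to_nat: "p \<in> initial_segment (Suc (to_nat p))"
  by (simp add: initial_segment_def)

locale hermitian_kernel =
  fixes m :: "'p::countable \<Rightarrow> 'p \<Rightarrow> complex"
  assumes finite_kernel_supp: "\<And>p. finite (kernel_supp m p)"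
    and hermitian: "\<And>p q. m q p = cnj (m p q)"
    and injective: "\<And>f. finite {p. f p \<noteq> 0} \<Longrightarrow> kernel_apply m f = 0 \<Longrightarrow> f = 0"
begin

lemma kernel_supp_sym: "q \<in> kernel_supp m p \<longleftrightarrow> p \<in> kernel_supp m q"
  using hermitian[of p q] by (auto simp: kernel_supp_def)

lemma kernel_apply_supported:
  assumes "finite A" "h \<in> supported_on A"
  shows "kernel_apply m h q = (\<Sum>p\<in>A. m q p * h p)"
proof -
  have "kernel_apply m h q = (\<Sum>p\<in>kernel_supp m q \<union> A. m q p * h p)"
    using assms finite_kernel_supp by (intro kernel_apply_eq_sum) auto
  also have "\<dots> = (\<Sum>p\<in>A. m q p * h p)"
    using assms finite_kernel_supp
    by (intro sum.mono_neutral_right) (auto simp: supported_on_def kernel_supp_def)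
  finally show ?thesis .
qed

lemma kernel_apply_supported_on:
  assumes "finite A" "h \<in> supported_on A"
  shows "kernel_apply m h \<in> supported_on (\<Union>p\<in>A. kernel_supp m p)"
  unfolding supported_on_def
proof safe
  fix q assume "q \<notin> (\<Union>p\<in>A. kernel_supp m p)"
  then have "\<forall>p\<in>A. m q p = 0"
    using kernel_supp_sym[of q] by (auto simp: kernel_supp_def)
  then show "kernel_apply m h q = 0"
    using kernel_apply_supported[OF assms] by simp
qed

lemma normal_pairing_eq_energy:
  assumes "finite A" "h \<in> supported_on A"
  defines "C \<equiv> \<Union>p\<in>A. kernel_supp m p"
  shows "(\<Sum>p\<in>A. kernel_apply m (kernel_apply m h) p * cnj (h p))
    = complex_of_real (\<Sum>q\<in>C. (cmod (kernel_apply m h q))\<^sup>2)"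
proof -
  let ?u = "kernel_apply m h"
  have "finite C"
    using assms(1) finite_kernel_supp by (auto simp: C_def)
  have "(\<Sum>p\<in>A. kernel_apply m ?u p * cnj (h p)) = (\<Sum>p\<in>A. \<Sum>q\<in>C. m p q * ?u q * cnj (h p))"
    using \<open>finite C\<close>
    by (intro sum.cong refl, subst kernel_apply_eq_sum) (auto simp: C_def sum_distrib_right)
  also have "\<dots> = (\<Sum>q\<in>C. \<Sum>p\<in>A. m p q * ?u q * cnj (h p))"
    by (rule sum.swap)
  also have "\<dots> = (\<Sum>q\<in>C. ?u q * cnj (\<Sum>p\<in>A. m q p * h p))"
    by (intro sum.cong refl) (simp add: sum_distrib_left hermitian[symmetric] algebra_simps)
  also have "\<dots> = (\<Sum>q\<in>C. ?u q * cnj (?u q))"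
    using kernel_apply_supported[OF assms(1,2)] by simp
  also have "\<dots> = complex_of_real (\<Sum>q\<in>C. (cmod (?u q))\<^sup>2)"
    by (simp only: of_real_sum complex_norm_square)
  finally show ?thesis .
qed

lemma normal_operator_injective:
  assumes "finite A" "h \<in> supported_on A" "\<forall>p\<in>A. kernel_apply m (kernel_apply m h) p = 0"
  shows "h = 0"
proof -
  define C where "C = (\<Union>p\<in>A. kernel_supp m p)"
  have "finite C"
    using assms(1) finite_kernel_supp by (auto simp: C_def)
  have "complex_of_real (\<Sum>q\<in>C. (cmod (kernel_apply m h q))\<^sup>2)
      = (\<Sum>p\<in>A. kernel_apply m (kernel_apply m h) p * cnj (h p))"
    using normal_pairing_eq_energy[OF assms(1,2)] by (simp only: C_def)
  also have "\<dots> = 0"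
    using assms(3) by simp
  finally have "(\<Sum>q\<in>C. (cmod (kernel_apply m h q))\<^sup>2) = 0"
    by (simp only: of_real_eq_0_iff)
  then have vanish_on_C: "\<forall>q\<in>C. kernel_apply m h q = 0"
    using \<open>finite C\<close> by (subst (asm) sum_nonneg_eq_0_iff) auto
  have "kernel_apply m h = 0"
  proof
    fix q
    show "kernel_apply m h q = 0 q"
      using vanish_on_C kernel_apply_supported_on[OF assms(1,2)]
      by (cases "q \<in> C") (auto simp: supported_on_def C_def)
  qed
  moreover have "finite {p. h p \<noteq> 0}"
    using assms(1,2) by (auto simp: supported_on_def intro: finite_subset[of _ A])
  ultimately show "h = 0"
    using injective by blast
qed

text \<open>On a finite set the equation is solved in the form \<open>f = Lh\<close>: the normal operator
  \<open>h \<mapsto> (LLh)|\<^sub>A\<close> is an injective, hence surjective, endomorphism of the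
  finite-dimensional space of functions supported on \<open>A\<close>.\<close>
lemma solvable_on_finite:
  assumes "finite A"
  shows "\<exists>f. \<forall>p\<in>A. kernel_apply m f p = g p"
proof -
  define T where "T h = zero_outside A (kernel_apply m (kernel_apply m h))" for h
  have "Vector_Spaces.linear cscale cscale T"
    by unfold_locales
      (auto simp: T_def zero_outside_def kernel_apply_add kernel_apply_cscale[unfolded cscale_def]
        fun_eq_iff cscale_def)
  moreover have "inj_on T (supported_on A)"
  proof (rule inj_onI)
    fix x y assume "x \<in> supported_on A" "y \<in> supported_on A" "T x = T y"
    then have "\<forall>p\<in>A. kernel_apply m (kernel_apply m x) p = kernel_apply m (kernel_apply m y) p"
      unfolding T_def zero_outside_def fun_eq_iff by metis
    then have "\<forall>p\<in>A. kernel_apply m (kernel_apply m (x - y)) p = 0"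
      by (simp add: kernel_apply_diff)
    moreover have "x - y \<in> supported_on A"
      using \<open>x \<in> supported_on A\<close> \<open>y \<in> supported_on A\<close> by (simp add: supported_on_def)
    ultimately show "x = y"
      using normal_operator_injective[OF assms] by (metis right_minus_eq)
  qed
  moreover have "T ` supported_on A \<subseteq> supported_on A"
    by (auto simp: T_def zero_outside_supported_on)
  ultimately have "T ` supported_on A = supported_on A"
    using cfun.linear_inj_on_imp_surj_on[OF _ supported_on_subspace supported_on_finite_span]
      assms by blast
  then obtain h where "T h = zero_outside A g"
    using zero_outside_supported_on by (metis imageE)
  then have "\<forall>p\<in>A. kernel_apply m (kernel_apply m h) p = g p"
    unfolding T_def zero_outside_def by (metis (full_types))
  then show ?thesis
    by blast
qed

definition segment_nbhd :: "nat \<Rightarrow> 'p set" where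
  "segment_nbhd n = initial_segment n \<union> (\<Union>p\<in>initial_segment n. kernel_supp m p)"

definition solutions_on :: "('p \<Rightarrow> complex) \<Rightarrow> 'p set \<Rightarrow> ('p \<Rightarrow> complex) set" where
  "solutions_on g A = {f. \<forall>p\<in>A. kernel_apply m f p = g p}"

definition traces :: "('p \<Rightarrow> complex) \<Rightarrow> nat \<Rightarrow> nat \<Rightarrow> ('p \<Rightarrow> complex) set" where
  "traces g n k = zero_outside (segment_nbhd n) ` solutions_on g (initial_segment k)"

lemma finite_segment_nbhd: "finite (segment_nbhd n)"
  using finite_initial_segment finite_kernel_supp by (auto simp: segment_nbhd_def)

lemma segment_nbhd_mono: "n \<le> n' \<Longrightarrow> segment_nbhd n \<subseteq> segment_nbhd n'"
  using initial_segment_mono by (fastforce simp: segment_nbhd_def)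

lemma initial_segment_subset_segment_nbhd: "initial_segment n \<subseteq> segment_nbhd n"
  by (auto simp: segment_nbhd_def)

lemma kernel_supp_subset_segment_nbhd:
  "p \<in> initial_segment n \<Longrightarrow> kernel_supp m p \<subseteq> segment_nbhd n"
  by (auto simp: segment_nbhd_def)

lemma solutions_on_nonempty: "finite A \<Longrightarrow> solutions_on g A \<noteq> {}"
  using solvable_on_finite by (auto simp: solutions_on_def)

lemma traces_antimono: "k \<le> k' \<Longrightarrow> traces g n k' \<subseteq> traces g n k"
  using initial_segment_mono unfolding traces_def solutions_on_def by blast

lemma subspace_traces_homogeneous: "cfun.subspace (traces 0 n k)"
  unfolding cfun.subspace_def
proof (intro conjI ballI allI)
  have "0 \<in> solutions_on 0 (initial_segment k)"
    by (simp add: solutions_on_def kernel_apply_zero)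
  moreover have "zero_outside (segment_nbhd n) 0 = 0"
    by (simp add: zero_outside_def fun_eq_iff)
  ultimately show "0 \<in> traces 0 n k"
    unfolding traces_def by (metis image_eqI)
next
  fix x y assume "x \<in> traces 0 n k" "y \<in> traces 0 n k"
  then obtain f1 f2 where f: "f1 \<in> solutions_on 0 (initial_segment k)"
    "f2 \<in> solutions_on 0 (initial_segment k)"
    "x = zero_outside (segment_nbhd n) f1" "y = zero_outside (segment_nbhd n) f2"
    unfolding traces_def by blast
  then have "f1 + f2 \<in> solutions_on 0 (initial_segment k)"
    by (simp add: solutions_on_def kernel_apply_add)
  moreover have "x + y = zero_outside (segment_nbhd n) (f1 + f2)"
    using f by (simp add: zero_outside_def fun_eq_iff)
  ultimately show "x + y \<in> traces 0 n k"
    unfolding traces_def by blast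
next
  fix c x assume "x \<in> traces 0 n k"
  then obtain f where f: "f \<in> solutions_on 0 (initial_segment k)"
    "x = zero_outside (segment_nbhd n) f"
    unfolding traces_def by blast
  moreover have "kernel_apply m (cscale c f) p = c * kernel_apply m f p" for p
    using fun_cong[OF kernel_apply_cscale[of m c f], of p] by (simp add: cscale_def)
  ultimately have "cscale c f \<in> solutions_on 0 (initial_segment k)"
    by (simp add: solutions_on_def)
  moreover have "cscale c x = zero_outside (segment_nbhd n) (cscale c f)"
    using f(2) by (simp add: zero_outside_def fun_eq_iff cscale_def)
  ultimately show "cscale c x \<in> traces 0 n k"
    unfolding traces_def by blast
qed

lemma traces_homogeneous_subset_span:
  "traces 0 n k \<subseteq> cfun.span ((\<lambda>p q. if q = p then 1 else 0) ` segment_nbhd n)"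
  using supported_on_finite_span[OF finite_segment_nbhd] zero_outside_supported_on
  unfolding traces_def by blast

lemma traces_eq_translate:
  assumes "f0 \<in> solutions_on g (initial_segment k)"
  shows "traces g n k = (\<lambda>u. zero_outside (segment_nbhd n) f0 + u) ` traces 0 n k"
proof (intro subset_antisym subsetI)
  fix x assume "x \<in> traces g n k"
  then obtain f where f: "f \<in> solutions_on g (initial_segment k)"
    "x = zero_outside (segment_nbhd n) f"
    unfolding traces_def by blast
  then have "f - f0 \<in> solutions_on 0 (initial_segment k)"
    using assms by (simp add: solutions_on_def kernel_apply_diff)
  moreover have "x = zero_outside (segment_nbhd n) f0 + zero_outside (segment_nbhd n) (f - f0)"
    using f by (simp add: zero_outside_def fun_eq_iff)
  ultimately show "x \<in> (\<lambda>u. zero_outside (segment_nbhd n) f0 + u) ` traces 0 n k"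
    unfolding traces_def by blast
next
  fix x assume "x \<in> (\<lambda>u. zero_outside (segment_nbhd n) f0 + u) ` traces 0 n k"
  then obtain f where f: "f \<in> solutions_on 0 (initial_segment k)"
    "x = zero_outside (segment_nbhd n) f0 + zero_outside (segment_nbhd n) f"
    unfolding traces_def by blast
  then have "f0 + f \<in> solutions_on g (initial_segment k)"
    using assms by (simp add: solutions_on_def kernel_apply_add)
  moreover have "x = zero_outside (segment_nbhd n) (f0 + f)"
    using f by (simp add: zero_outside_def fun_eq_iff)
  ultimately show "x \<in> traces g n k"
    unfolding traces_def by blast
qed

lemma traces_stabilize: "\<exists>M. \<forall>k\<ge>M. traces g n k = traces g n M"
proof -
  obtain M where M: "\<And>k. k \<ge> M \<Longrightarrow> traces 0 n k = traces 0 n M"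
    using cfun.decreasing_subspaces_stabilize[of "traces 0 n", OF subspace_traces_homogeneous
        traces_antimono traces_homogeneous_subset_span] finite_segment_nbhd by blast
  have "traces g n k = traces g n M" if "k \<ge> M" for k
  proof -
    obtain f0 where "f0 \<in> solutions_on g (initial_segment k)"
      using solutions_on_nonempty[OF finite_initial_segment] by blast
    moreover from this have "f0 \<in> solutions_on g (initial_segment M)"
      using initial_segment_mono[OF that] by (auto simp: solutions_on_def)
    ultimately show ?thesis
      using traces_eq_translate M[OF that] by metis
  qed
  then show ?thesis
    by blast
qed

text \<open>Mittag-Leffler argument: the traces that extend to solutions on every initial segment
  form a nonempty inverse system, and a coherent choice in it glues to a global solution.\<close>
definition stable_traces :: "('p \<Rightarrow> complex) \<Rightarrow> nat \<Rightarrow> ('p \<Rightarrow> complex) set" where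
  "stable_traces g n = (\<Inter>k. traces g n k)"

lemma stable_traces_eq_traces: "\<exists>M. \<forall>k\<ge>M. stable_traces g n = traces g n k"
proof -
  obtain M where M: "\<And>k. k \<ge> M \<Longrightarrow> traces g n k = traces g n M"
    using traces_stabilize by blast
  have "stable_traces g n = traces g n k" if "k \<ge> M" for k
  proof (intro subset_antisym)
    have "traces g n k \<subseteq> traces g n j" for j
      using traces_antimono[of j k] M[of j] M[OF that] that by (cases "j \<le> k") auto
    then show "traces g n k \<subseteq> stable_traces g n"
      by (auto simp: stable_traces_def)
  qed (auto simp: stable_traces_def)
  then show ?thesis
    by blast
qed

lemma stable_traces_nonempty: "stable_traces g n \<noteq> {}"
  using stable_traces_eq_traces[of g n] solutions_on_nonempty[OF finite_initial_segment]
  by (auto simp: traces_def)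

lemma stable_traces_extend:
  assumes "h \<in> stable_traces g n"
  shows "\<exists>h'\<in>stable_traces g (Suc n). zero_outside (segment_nbhd n) h' = h"
proof -
  obtain M M' where M: "\<And>k. k \<ge> M \<Longrightarrow> stable_traces g n = traces g n k"
    and M': "\<And>k. k \<ge> M' \<Longrightarrow> stable_traces g (Suc n) = traces g (Suc n) k"
    using stable_traces_eq_traces by metis
  define k where "k = max M M'"
  obtain f where f: "f \<in> solutions_on g (initial_segment k)" "h = zero_outside (segment_nbhd n) f"
    using assms M[of k] by (auto simp: k_def traces_def)
  have "zero_outside (segment_nbhd (Suc n)) f \<in> stable_traces g (Suc n)"
    using f M'[of k] by (auto simp: k_def traces_def)
  moreover have "zero_outside (segment_nbhd n) (zero_outside (segment_nbhd (Suc n)) f) = h"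
    using f segment_nbhd_mono[of n "Suc n"] by (auto simp: zero_outside_def fun_eq_iff)
  ultimately show ?thesis
    by blast
qed

lemma stable_traces_solve:
  assumes "h \<in> stable_traces g n" "p \<in> initial_segment n"
    and "\<And>q. q \<in> segment_nbhd n \<Longrightarrow> F q = h q"
  shows "kernel_apply m F p = g p"
proof -
  obtain f where f: "f \<in> solutions_on g (initial_segment n)" "h = zero_outside (segment_nbhd n) f"
    using assms(1) by (auto simp: stable_traces_def traces_def)
  have "kernel_apply m F p = kernel_apply m f p"
    using assms(3) f(2) kernel_supp_subset_segment_nbhd[OF assms(2)]
    by (intro kernel_apply_cong) (auto simp: zero_outside_def)
  also have "\<dots> = g p"
    using f(1) assms(2) by (simp add: solutions_on_def)
  finally show ?thesis .
qed

theorem kernel_apply_surjective: "\<exists>f. kernel_apply m f = g"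
proof -
  obtain hs where hs: "\<And>n. hs n \<in> stable_traces g n"
    "\<And>n. zero_outside (segment_nbhd n) (hs (Suc n)) = hs n"
    using dependent_nat_choice[of "\<lambda>n h. h \<in> stable_traces g n"
        "\<lambda>n h h'. zero_outside (segment_nbhd n) h' = h"]
      stable_traces_nonempty stable_traces_extend by blast
  have coherent: "hs K q = hs n q" if "n \<le> K" "q \<in> segment_nbhd n" for n K q
    using that(1)
  proof (induction K rule: dec_induct)
    case (step K)
    have "q \<in> segment_nbhd K"
      using segment_nbhd_mono[OF step(1)] that(2) by blast
    then have "hs (Suc K) q = hs K q"
      using hs(2)[of K] unfolding zero_outside_def fun_eq_iff by metis
    then show ?case
      using step(3) by simp
  qed simp
  define f where "f q = hs (Suc (to_nat q)) q" for q
  have "f q = hs n q" if "q \<in> segment_nbhd n" for n q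
  proof -
    have "q \<in> segment_nbhd (Suc (to_nat q))"
      using initial_segment_subset_segment_nbhd mem_initial_segment_Suc_to_nat by blast
    then show ?thesis
      using coherent[of n "max n (Suc (to_nat q))" q] that
        coherent[of "Suc (to_nat q)" "max n (Suc (to_nat q))" q]
      by (simp add: f_def)
  qed
  then have "kernel_apply m f p = g p" for p
    using stable_traces_solve[OF hs(1) mem_initial_segment_Suc_to_nat] by blast
  then show ?thesis
    by blast
qed

end

section \<open>Rayleigh quotients of Hermitian matrices\<close>

lemma quadratic_nonneg_imp_linear_coeff_zero:
  fixes a b c :: real
  assumes "a \<le> 0" "\<And>t. 0 \<le> a + b * t + c * t\<^sup>2"
  shows "b = 0"
proof (rule ccontr)
  assume "b \<noteq> 0"
  define k where "k = \<bar>c\<bar> + 1"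
  define t where "t = - b / k"
  have "k > 0"
    by (simp add: k_def add_pos_nonneg)
  have "c * t\<^sup>2 \<le> (k - 1) * t\<^sup>2"
    by (intro mult_right_mono) (auto simp: k_def)
  moreover have "b * t + (k - 1) * t\<^sup>2 = - b\<^sup>2 / k\<^sup>2"
    using \<open>k > 0\<close> by (simp add: t_def field_simps power2_eq_square)
  moreover have "b\<^sup>2 / k\<^sup>2 > 0"
    using \<open>b \<noteq> 0\<close> \<open>k > 0\<close> by simp
  ultimately have "a + b * t + c * t\<^sup>2 < 0"
    using assms(1) by linarith
  then show False
    using assms(2)[of t] by simp
qed

lemma compact_coordinate_ball:
  "compact (PiE UNIV (\<lambda>i::nat. if i < n then cball (0::complex) 1 else {0}))"
proof -
  have "compactin (product_topology (\<lambda>i. euclidean) UNIV)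
          (PiE UNIV (\<lambda>i::nat. if i < n then cball (0::complex) 1 else {0}))"
    by (subst compactin_PiE) auto
  then show ?thesis
    by (simp add: euclidean_product_topology)
qed

lemma continuous_on_coordinate: "continuous_on S (\<lambda>v::nat \<Rightarrow> complex. v i)"
  by (rule continuous_on_subset[OF continuous_on_product_coordinates]) simp

definition mat_apply :: "nat \<Rightarrow> (nat \<Rightarrow> nat \<Rightarrow> complex) \<Rightarrow> (nat \<Rightarrow> complex) \<Rightarrow> nat \<Rightarrow> complex"
  where "mat_apply n a v i = (\<Sum>j<n. a i j * v j)"

definition sesq_form ::
    "nat \<Rightarrow> (nat \<Rightarrow> nat \<Rightarrow> complex) \<Rightarrow> (nat \<Rightarrow> complex) \<Rightarrow> (nat \<Rightarrow> complex) \<Rightarrow> complex"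
  where "sesq_form n a u v = (\<Sum>i<n. cnj (u i) * mat_apply n a v i)"

definition coord_sq_norm :: "nat \<Rightarrow> (nat \<Rightarrow> complex) \<Rightarrow> real"
  where "coord_sq_norm n u = (\<Sum>i<n. (cmod (u i))\<^sup>2)"

lemma continuous_on_coord_sq_norm: "continuous_on S (coord_sq_norm n)"
  unfolding coord_sq_norm_def[abs_def]
  by (intro continuous_on_sum continuous_on_power continuous_on_norm continuous_on_coordinate)

lemma continuous_on_sesq_form_diag: "continuous_on S (\<lambda>u. Re (sesq_form n a u u))"
  unfolding sesq_form_def mat_apply_def
  by (intro continuous_on_Re continuous_on_sum continuous_on_mult continuous_on_cnj
      continuous_on_coordinate continuous_on_const)

lemma coord_sq_norm_nonneg: "coord_sq_norm n u \<ge> 0"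
  by (simp add: coord_sq_norm_def sum_nonneg)

lemma coord_sq_norm_eq_0D: "coord_sq_norm n u = 0 \<Longrightarrow> i < n \<Longrightarrow> u i = 0"
  unfolding coord_sq_norm_def by (subst (asm) sum_nonneg_eq_0_iff) auto

lemma coord_sq_norm_cong: "(\<And>i. i < n \<Longrightarrow> u i = u' i) \<Longrightarrow> coord_sq_norm n u = coord_sq_norm n u'"
  unfolding coord_sq_norm_def by (intro sum.cong refl) auto

lemma sesq_form_cong:
  "(\<And>i. i < n \<Longrightarrow> u i = u' i) \<Longrightarrow> (\<And>i. i < n \<Longrightarrow> v i = v' i)
    \<Longrightarrow> sesq_form n a u v = sesq_form n a u' v'"
  unfolding sesq_form_def mat_apply_def by (intro sum.cong refl) auto

lemma sesq_form_add_scaled: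
  fixes t :: real and u v :: "nat \<Rightarrow> complex"
  shows "sesq_form n a (\<lambda>i. u i + t * v i) (\<lambda>i. u i + t * v i) =
     sesq_form n a u u + t * sesq_form n a v u + t * sesq_form n a u v + t\<^sup>2 * sesq_form n a v v"
proof -
  have "mat_apply n a (\<lambda>i. u i + t * v i) i = mat_apply n a u i + t * mat_apply n a v i" for i
    unfolding mat_apply_def by (simp add: sum.distrib sum_distrib_left ring_distribs mult.left_commute)
  then show ?thesis
    by (simp add: sesq_form_def sum.distrib sum_distrib_left ring_distribs power2_eq_square
        mult.assoc mult.left_commute)
qed

lemma sesq_form_conj_swap:
  assumes "\<And>i j. i < n \<Longrightarrow> j < n \<Longrightarrow> cnj (a i j) = a j i"
  shows "sesq_form n a u v = cnj (sesq_form n a v u)"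
proof -
  have "sesq_form n a u v = (\<Sum>i<n. \<Sum>j<n. cnj (u i) * a i j * v j)"
    by (simp add: sesq_form_def mat_apply_def sum_distrib_left mult.assoc)
  also have "\<dots> = (\<Sum>j<n. \<Sum>i<n. cnj (u i) * a i j * v j)"
    by (rule sum.swap)
  also have "\<dots> = (\<Sum>j<n. \<Sum>i<n. v j * (cnj (a j i) * cnj (u i)))"
    by (intro sum.cong refl) (simp add: assms mult.commute mult.left_commute)
  also have "\<dots> = cnj (\<Sum>j<n. cnj (v j) * (\<Sum>i<n. a j i * u i))"
    by (simp add: sum_distrib_left)
  finally show ?thesis
    by (simp add: sesq_form_def mat_apply_def)
qed

lemma sesq_form_divide:
  fixes s :: real and u :: "nat \<Rightarrow> complex"
  shows "sesq_form n a (\<lambda>i. u i / s) (\<lambda>i. u i / s) = sesq_form n a u u / s\<^sup>2"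
proof -
  have "mat_apply n a (\<lambda>i. u i / s) i = mat_apply n a u i / s" for i
    by (simp add: mat_apply_def sum_divide_distrib)
  then show ?thesis
    by (simp add: sesq_form_def sum_divide_distrib power2_eq_square)
qed

lemma coord_sq_norm_divide:
  fixes s :: real and u :: "nat \<Rightarrow> complex"
  shows "coord_sq_norm n (\<lambda>i. u i / s) = coord_sq_norm n u / s\<^sup>2"
  by (simp add: coord_sq_norm_def sum_divide_distrib norm_divide power_divide)

lemma mat_apply_shift:
  "i < n \<Longrightarrow> mat_apply n (\<lambda>i j. a i j - (if i = j then c else 0)) v i = mat_apply n a v i - c * v i"
  by (simp add: mat_apply_def left_diff_distrib sum_subtractf if_distrib[of "\<lambda>x. x * _"]
      cong: if_cong)

lemma sesq_form_shift:
  "sesq_form n (\<lambda>i j. a i j - (if i = j then of_real \<mu> else 0)) u u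
    = sesq_form n a u u - of_real (\<mu> * coord_sq_norm n u)"
proof -
  have "sesq_form n (\<lambda>i j. a i j - (if i = j then of_real \<mu> else 0)) u u
      = (\<Sum>i<n. cnj (u i) * mat_apply n a u i - of_real \<mu> * (u i * cnj (u i)))"
    unfolding sesq_form_def by (intro sum.cong refl) (simp add: mat_apply_shift algebra_simps)
  also have "\<dots> = sesq_form n a u u - of_real \<mu> * (\<Sum>i<n. u i * cnj (u i))"
    by (simp add: sesq_form_def sum_subtractf sum_distrib_left)
  also have "(\<Sum>i<n. u i * cnj (u i)) = of_real (coord_sq_norm n u)"
    unfolding coord_sq_norm_def of_real_sum by (simp only: complex_norm_square)
  finally show ?thesis
    by simp
qed

definition coord_unit_sphere :: "nat \<Rightarrow> (nat \<Rightarrow> complex) set" where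
  "coord_unit_sphere n = PiE UNIV (\<lambda>i. if i < n then cball 0 1 else {0}) \<inter> {v. coord_sq_norm n v = 1}"

lemma compact_coord_unit_sphere: "compact (coord_unit_sphere n)"
  unfolding coord_unit_sphere_def
  by (intro compact_Int_closed compact_coordinate_ball closed_Collect_eq
      continuous_on_coord_sq_norm continuous_on_const)

lemma first_unit_vector_in_coord_unit_sphere: "n > 0 \<Longrightarrow> (\<lambda>i. if i = 0 then 1 else 0) \<in> coord_unit_sphere n"
  by (auto simp: coord_unit_sphere_def PiE_iff coord_sq_norm_def if_distrib[of "\<lambda>x. (cmod x)\<^sup>2"]
      cong: if_cong)

lemma normalize_in_coord_unit_sphere:
  assumes "coord_sq_norm n u \<noteq> 0"
  shows "\<exists>u'\<in>coord_unit_sphere n. sesq_form n a u' u' = sesq_form n a u u / coord_sq_norm n u"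
proof -
  define s where "s = sqrt (coord_sq_norm n u)"
  have s: "s > 0" "s\<^sup>2 = coord_sq_norm n u"
    using assms coord_sq_norm_nonneg[of n u] by (auto simp: s_def)
  define u' where "u' = (\<lambda>i. if i < n then u i / s else 0)"
  have "coord_sq_norm n u' = coord_sq_norm n (\<lambda>i. u i / s)"
    by (rule coord_sq_norm_cong) (simp add: u'_def)
  then have "coord_sq_norm n u' = 1"
    using coord_sq_norm_divide[of n u s] s assms by simp
  moreover have "cmod (u' i) \<le> 1" if "i < n" for i
  proof -
    have "(cmod (u i))\<^sup>2 \<le> coord_sq_norm n u"
      unfolding coord_sq_norm_def using that by (intro member_le_sum) auto
    then have "cmod (u i) \<le> s"
      unfolding s_def by (rule real_le_rsqrt)
    then show ?thesis
      using that s by (simp add: u'_def norm_divide divide_le_eq)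
  qed
  ultimately have "u' \<in> coord_unit_sphere n"
    by (auto simp: coord_unit_sphere_def PiE_iff u'_def)
  moreover have "sesq_form n a u' u' = sesq_form n a (\<lambda>i. u i / s) (\<lambda>i. u i / s)"
    by (rule sesq_form_cong) (simp_all add: u'_def)
  then have "sesq_form n a u' u' = sesq_form n a u u / coord_sq_norm n u"
    by (simp add: sesq_form_divide s(2))
  ultimately show ?thesis
    by blast
qed

text \<open>By homogeneity it suffices to minimise over the unit sphere, which is compact.\<close>
lemma sesq_form_min_on_unit_sphere:
  assumes "n > 0"
  shows "\<exists>e. coord_sq_norm n e = 1 \<and>
    (\<forall>u. Re (sesq_form n a e e) * coord_sq_norm n u \<le> Re (sesq_form n a u u))"
proof -
  obtain e where e: "e \<in> coord_unit_sphere n"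
    "\<And>y. y \<in> coord_unit_sphere n \<Longrightarrow> Re (sesq_form n a e e) \<le> Re (sesq_form n a y y)"
    using continuous_attains_inf[OF compact_coord_unit_sphere _ continuous_on_sesq_form_diag]
      first_unit_vector_in_coord_unit_sphere[OF assms] by blast
  have "Re (sesq_form n a e e) * coord_sq_norm n u \<le> Re (sesq_form n a u u)" for u
  proof (cases "coord_sq_norm n u = 0")
    case True
    then have "sesq_form n a u u = sesq_form n a (\<lambda>_. 0) (\<lambda>_. 0)"
      using coord_sq_norm_eq_0D by (intro sesq_form_cong) auto
    then show ?thesis
      using True by (simp add: sesq_form_def mat_apply_def)
  next
    case False
    then obtain u' where "u' \<in> coord_unit_sphere n"
      "sesq_form n a u' u' = sesq_form n a u u / coord_sq_norm n u"
      using normalize_in_coord_unit_sphere by blast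
    then have "Re (sesq_form n a e e) \<le> Re (sesq_form n a u u) / coord_sq_norm n u"
      using e(2) by fastforce
    moreover have "coord_sq_norm n u > 0"
      using False coord_sq_norm_nonneg[of n u] by simp
    ultimately show ?thesis
      by (simp add: pos_le_divide_eq)
  qed
  then show ?thesis
    using e(1) by (auto simp: coord_unit_sphere_def)
qed

text \<open>Expanding the form at \<open>e + t Ae\<close> gives a real quadratic in \<open>t\<close> with linear
  coefficient \<open>2|Ae|\<^sup>2\<close>.\<close>
lemma nonneg_sesq_form_null_vector:
  assumes herm: "\<And>i j. i < n \<Longrightarrow> j < n \<Longrightarrow> cnj (a i j) = a j i"
    and nonneg: "\<And>u. 0 \<le> Re (sesq_form n a u u)" and null: "Re (sesq_form n a e e) = 0"
    and "i < n"
  shows "mat_apply n a e i = 0"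
proof -
  define w where "w = mat_apply n a e"
  define N where "N = coord_sq_norm n w"
  have "sesq_form n a w e = (\<Sum>i<n. w i * cnj (w i))"
    by (simp add: sesq_form_def w_def mult.commute)
  also have "\<dots> = of_real N"
    unfolding N_def coord_sq_norm_def of_real_sum by (simp only: complex_norm_square)
  finally have "sesq_form n a w e = of_real N" .
  moreover have "sesq_form n a e w = cnj (sesq_form n a w e)"
    by (rule sesq_form_conj_swap[OF herm])
  ultimately have "Re (sesq_form n a (\<lambda>i. e i + t * w i) (\<lambda>i. e i + t * w i))
      = 0 + 2 * N * t + Re (sesq_form n a w w) * t\<^sup>2" for t :: real
    using null by (simp add: sesq_form_add_scaled)
  then have "0 \<le> 0 + 2 * N * t + Re (sesq_form n a w w) * t\<^sup>2" for t :: real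
    by (metis nonneg)
  then have "N = 0"
    using quadratic_nonneg_imp_linear_coeff_zero[of 0 "2 * N" "Re (sesq_form n a w w)"] by simp
  then show ?thesis
    using coord_sq_norm_eq_0D[of n w i] \<open>i < n\<close> by (simp add: N_def w_def)
qed

lemma rayleigh_min_eigenvalue:
  assumes "n > 0" and herm: "\<And>i j. i < n \<Longrightarrow> j < n \<Longrightarrow> cnj (a i j) = a j i"
  shows "\<exists>\<mu> e. (\<exists>i<n. e i \<noteq> 0) \<and> (\<forall>i<n. mat_apply n a e i = of_real \<mu> * e i) \<and>
     (\<forall>u. \<mu> * coord_sq_norm n u \<le> Re (sesq_form n a u u))"
proof -
  obtain e where e: "coord_sq_norm n e = 1"
    "\<And>u. Re (sesq_form n a e e) * coord_sq_norm n u \<le> Re (sesq_form n a u u)"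
    using sesq_form_min_on_unit_sphere[OF \<open>n > 0\<close>] by blast
  define \<mu> where "\<mu> = Re (sesq_form n a e e)"
  define b where "b = (\<lambda>i j. a i j - (if i = j then of_real \<mu> else 0))"
  have "mat_apply n b e i = 0" if "i < n" for i
  proof (rule nonneg_sesq_form_null_vector[OF _ _ _ that])
    show "cnj (b i j) = b j i" if "i < n" "j < n" for i j
      using herm[OF that] by (auto simp: b_def)
    show "0 \<le> Re (sesq_form n b u u)" for u
      using e(2)[of u] sesq_form_shift[of n a \<mu> u] by (simp add: b_def \<mu>_def)
    show "Re (sesq_form n b e e) = 0"
      using sesq_form_shift[of n a \<mu> e] e(1) by (simp add: b_def \<mu>_def)
  qed
  then have "\<forall>i<n. mat_apply n a e i = of_real \<mu> * e i"
    using mat_apply_shift[of _ n a "of_real \<mu>" e] by (simp add: b_def)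
  moreover have "\<exists>i<n. e i \<noteq> 0"
  proof (rule ccontr)
    assume "\<not> (\<exists>i<n. e i \<noteq> 0)"
    then have "coord_sq_norm n e = 0"
      by (simp add: coord_sq_norm_def)
    then show False
      using e(1) by simp
  qed
  ultimately show ?thesis
    using e(2) \<mu>_def by blast
qed

lemma cscalar_prod_eq_sum:
  fixes v w :: "complex vec"
  assumes "dim_vec w = n"
  shows "v \<bullet>c w = (\<Sum>i<n. v $ i * cnj (w $ i))"
  using assms by (simp add: scalar_prod_def atLeast0LessThan)

definition vec_sq_norm :: "complex vec \<Rightarrow> real" where
  "vec_sq_norm v = (\<Sum>i<dim_vec v. (cmod (v $ i))\<^sup>2)"

lemma vec_sq_norm_nonneg: "vec_sq_norm v \<ge> 0"
  by (simp add: vec_sq_norm_def sum_nonneg)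

lemma cscalar_prod_self: "v \<bullet>c v = complex_of_real (vec_sq_norm v)"
  unfolding cscalar_prod_eq_sum[OF refl] vec_sq_norm_def of_real_sum
  by (simp only: complex_norm_square)

lemma vec_sq_norm_eq_0D:
  assumes "v \<in> carrier_vec n" "vec_sq_norm v = 0"
  shows "v = 0\<^sub>v n"
proof (rule eq_vecI)
  fix i assume "i < dim_vec (0\<^sub>v n)"
  then have "i < dim_vec v"
    using assms by simp
  then have "(cmod (v $ i))\<^sup>2 = 0"
    using assms(2) unfolding vec_sq_norm_def by (subst (asm) sum_nonneg_eq_0_iff) auto
  then show "v $ i = 0\<^sub>v n $ i"
    using \<open>i < dim_vec v\<close> assms by simp
qed (use assms in simp)

lemma vec_sq_norm_eq_coord_sq_norm: "v \<in> carrier_vec n \<Longrightarrow> vec_sq_norm v = coord_sq_norm n (\<lambda>i. v $ i)"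
  by (simp add: vec_sq_norm_def coord_sq_norm_def)

lemma cscalar_prod_norm_le:
  assumes "dim_vec u = dim_vec v"
  shows "cmod (u \<bullet>c v) \<le> sqrt (vec_sq_norm u) * sqrt (vec_sq_norm v)"
proof -
  have "cmod (u \<bullet>c v) \<le> (\<Sum>i<dim_vec u. cmod (u $ i) * cmod (v $ i))"
    unfolding cscalar_prod_eq_sum[OF assms[symmetric]]
    by (rule order_trans[OF norm_sum]) (simp add: norm_mult)
  also have "\<dots> \<le> sqrt (vec_sq_norm u * vec_sq_norm v)"
    unfolding vec_sq_norm_def assms by (rule real_le_rsqrt, rule Cauchy_Schwarz_ineq_sum)
  also have "\<dots> = sqrt (vec_sq_norm u) * sqrt (vec_sq_norm v)"
    by (rule real_sqrt_mult)
  finally show ?thesis .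
qed

lemma index_mat_adjoint:
  "A \<in> carrier_mat m n \<Longrightarrow> i < n \<Longrightarrow> j < m \<Longrightarrow> mat_adjoint A $$ (i,j) = cnj (A $$ (j,i))"
  unfolding mat_adjoint_def by (simp add: mat_of_rows_index)

lemma mat_adjoint_carrier: "A \<in> carrier_mat m n \<Longrightarrow> mat_adjoint A \<in> carrier_mat n m"
  by (intro carrier_matI) (simp_all add: mat_adjoint_def)

lemma hermitian_mat_index:
  "A \<in> carrier_mat n n \<Longrightarrow> mat_adjoint A = A \<Longrightarrow> i < n \<Longrightarrow> j < n \<Longrightarrow> cnj (A $$ (i,j)) = A $$ (j,i)"
  using index_mat_adjoint[of A n n j i] by simp

lemma index_mult_mat_vec_sum:
  "A \<in> carrier_mat n m \<Longrightarrow> v \<in> carrier_vec m \<Longrightarrow> i < n \<Longrightarrow> (A *\<^sub>v v) $ i = (\<Sum>j<m. A $$ (i,j) * v $ j)"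
  by (simp add: scalar_prod_def atLeast0LessThan)

lemma cscalar_prod_mult_mat_vec:
  assumes "A \<in> carrier_mat n n" "v \<in> carrier_vec n"
  shows "(A *\<^sub>v v) \<bullet>c v = sesq_form n (\<lambda>i j. A $$ (i,j)) (\<lambda>i. v $ i) (\<lambda>i. v $ i)"
proof -
  have "(A *\<^sub>v v) \<bullet>c v = (\<Sum>i<n. (\<Sum>j<n. A $$ (i,j) * v $ j) * cnj (v $ i))"
    using assms
    by (auto simp: cscalar_prod_eq_sum index_mult_mat_vec_sum simp del: index_mult_mat_vec
        intro: sum.cong)
  then show ?thesis
    by (simp add: sesq_form_def mat_apply_def mult.commute)
qed

lemma unitary_vec_sq_norm:
  assumes U: "U \<in> carrier_mat m n" and "mat_adjoint U * U = 1\<^sub>m n" and v: "v \<in> carrier_vec n"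
  shows "vec_sq_norm (U *\<^sub>v v) = vec_sq_norm v"
proof -
  have ortho: "(\<Sum>i<m. cnj (U $$ (i,k)) * U $$ (i,j)) = (if k = j then 1 else 0)"
    if "k < n" "j < n" for k j
  proof -
    have "(mat_adjoint U * U) $$ (k,j) = (\<Sum>i<m. mat_adjoint U $$ (k,i) * U $$ (i,j))"
      using U mat_adjoint_carrier[OF U] that by (simp add: scalar_prod_def atLeast0LessThan)
    also have "\<dots> = (\<Sum>i<m. cnj (U $$ (i,k)) * U $$ (i,j))"
      using index_mat_adjoint[OF U] that by (intro sum.cong refl) auto
    finally show ?thesis
      using assms(2) that by simp
  qed
  have "complex_of_real (vec_sq_norm (U *\<^sub>v v))
      = (\<Sum>i<m. (\<Sum>j<n. U $$ (i,j) * v $ j) * cnj (\<Sum>k<n. U $$ (i,k) * v $ k))"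
    unfolding cscalar_prod_self[symmetric] using U v
    by (auto simp: cscalar_prod_eq_sum index_mult_mat_vec_sum simp del: index_mult_mat_vec
        intro: sum.cong)
  also have "\<dots> = (\<Sum>i<m. \<Sum>j<n. \<Sum>k<n. v $ j * cnj (v $ k) * (cnj (U $$ (i,k)) * U $$ (i,j)))"
    by (simp add: sum_distrib_left sum_distrib_right mult_ac) (rule sum.cong[OF refl], rule sum.swap)
  also have "\<dots> = (\<Sum>j<n. \<Sum>k<n. v $ j * cnj (v $ k) * (\<Sum>i<m. cnj (U $$ (i,k)) * U $$ (i,j)))"
    by (simp add: sum_distrib_left sum.swap[of _ "{..<m}"])
  also have "\<dots> = (\<Sum>j<n. v $ j * cnj (v $ j))"
    by (simp add: ortho if_distrib cong: if_cong)
  also have "\<dots> = complex_of_real (vec_sq_norm v)"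
    using v by (simp add: cscalar_prod_self[symmetric] cscalar_prod_eq_sum)
  finally show ?thesis
    by (simp only: of_real_eq_iff)
qed

lemma finite_real_eigenvalues:
  fixes A :: "complex mat"
  assumes "A \<in> carrier_mat n n"
  shows "finite {l::real. eigenvalue A (of_real l)}"
proof -
  have "char_poly A \<noteq> 0"
    using degree_monic_char_poly[OF assms] by auto
  then have "finite {k. poly (char_poly A) k = 0}"
    by (rule poly_roots_finite)
  then have "finite (of_real -` {k. poly (char_poly A) k = 0} :: real set)"
    by (rule finite_vimageI) (auto simp: inj_on_def)
  moreover have "{l::real. eigenvalue A (of_real l)} = of_real -` {k. poly (char_poly A) k = 0}"
    using eigenvalue_root_char_poly[OF assms] by auto
  ultimately show ?thesis
    by simp
qed

lemma eigenvalueI_coordinates: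
  fixes A :: "complex mat"
  assumes A: "A \<in> carrier_mat n n" and "\<exists>i<n. e i \<noteq> 0"
    and eigen: "\<forall>i<n. (\<Sum>j<n. A $$ (i,j) * e j) = \<mu> * e i"
  shows "eigenvalue A \<mu>"
  unfolding eigenvalue_def eigenvector_def
proof (intro exI conjI)
  show "vec n e \<in> carrier_vec (dim_row A)"
    using A by simp
  show "vec n e \<noteq> 0\<^sub>v (dim_row A)"
    using A assms(2) by (auto simp: vec_eq_iff)
  show "A *\<^sub>v vec n e = \<mu> \<cdot>\<^sub>v vec n e"
    using A eigen by (auto simp: vec_eq_iff index_mult_mat_vec_sum[OF A] simp del: index_mult_mat_vec)
qed

lemma hermitian_Min_eigenvalue_le:
  assumes A: "A \<in> carrier_mat n n" and "mat_adjoint A = A" "n > 0" and v: "v \<in> carrier_vec n"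
  shows "Min {l. eigenvalue A (of_real l)} * vec_sq_norm v \<le> Re ((A *\<^sub>v v) \<bullet>c v)"
proof -
  obtain \<mu> e where e: "\<exists>i<n. e i \<noteq> 0" "\<forall>i<n. mat_apply n (\<lambda>i j. A $$ (i,j)) e i = of_real \<mu> * e i"
    and bound: "\<forall>u. \<mu> * coord_sq_norm n u \<le> Re (sesq_form n (\<lambda>i j. A $$ (i,j)) u u)"
    using rayleigh_min_eigenvalue[of n "\<lambda>i j. A $$ (i,j)"] hermitian_mat_index[OF A] assms by blast
  have "eigenvalue A (of_real \<mu>)"
    using eigenvalueI_coordinates[OF A e(1)] e(2) by (simp add: mat_apply_def)
  then have "Min {l. eigenvalue A (of_real l)} \<le> \<mu>"
    using finite_real_eigenvalues[OF A] by (intro Min_le) auto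
  moreover have "\<mu> * vec_sq_norm v \<le> Re ((A *\<^sub>v v) \<bullet>c v)"
    using bound cscalar_prod_mult_mat_vec[OF A v] vec_sq_norm_eq_coord_sq_norm[OF v] by simp
  ultimately show ?thesis
    using vec_sq_norm_nonneg[of v] by (meson mult_right_mono order_trans)
qed

lemma hermitian_Max_eigenvalue_ge:
  assumes A: "A \<in> carrier_mat n n" and "mat_adjoint A = A" "n > 0" and v: "v \<in> carrier_vec n"
  shows "Re ((A *\<^sub>v v) \<bullet>c v) \<le> Max {l. eigenvalue A (of_real l)} * vec_sq_norm v"
proof -
  obtain \<mu> e where e: "\<exists>i<n. e i \<noteq> 0" "\<forall>i<n. mat_apply n (\<lambda>i j. - A $$ (i,j)) e i = of_real \<mu> * e i"
    and bound: "\<forall>u. \<mu> * coord_sq_norm n u \<le> Re (sesq_form n (\<lambda>i j. - A $$ (i,j)) u u)"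
    using rayleigh_min_eigenvalue[of n "\<lambda>i j. - A $$ (i,j)"] hermitian_mat_index[OF A] assms
    by fastforce
  have "\<forall>i<n. (\<Sum>j<n. A $$ (i,j) * e j) = of_real (- \<mu>) * e i"
    using e(2) by (simp add: mat_apply_def sum_negf minus_equation_iff[of "sum _ _"])
  then have "eigenvalue A (of_real (- \<mu>))"
    using eigenvalueI_coordinates[OF A e(1)] by blast
  then have "- \<mu> \<le> Max {l. eigenvalue A (of_real l)}"
    using finite_real_eigenvalues[OF A] by (intro Max_ge) auto
  moreover have "sesq_form n (\<lambda>i j. - A $$ (i,j)) u u = - sesq_form n (\<lambda>i j. A $$ (i,j)) u u" for u
    by (simp add: sesq_form_def mat_apply_def sum_negf)
  then have "Re ((A *\<^sub>v v) \<bullet>c v) \<le> - \<mu> * vec_sq_norm v"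
    using bound[rule_format, of "\<lambda>i. v $ i"] cscalar_prod_mult_mat_vec[OF A v] vec_sq_norm_eq_coord_sq_norm[OF v] by simp
  ultimately show ?thesis
    using vec_sq_norm_nonneg[of v] by (meson mult_right_mono order_trans)
qed

section \<open>Energy forms on locally finite graphs\<close>

lemma exit_edge_of_finite_set:
  assumes "finite S" "x \<in> S" "infinite (component b x)"
  shows "\<exists>y z. y \<in> S \<and> z \<notin> S \<and> b y z > 0"
proof -
  obtain w where w: "w \<in> component b x" "w \<notin> S"
    using assms(1,3) by (meson finite_subset subsetI)
  have "(x, w) \<in> (edges b)\<^sup>*"
    using w(1) by (simp add: component_def)
  then have "w \<notin> S \<longrightarrow> (\<exists>y z. y \<in> S \<and> z \<notin> S \<and> b y z > 0)"
  proof (induction rule: rtrancl_induct)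
    case base
    then show ?case
      using assms(2) by blast
  next
    case (step y w)
    then show ?case
      by (cases "y \<in> S") (auto simp: edges_def)
  qed
  then show ?thesis
    using w(2) by blast
qed

locale locally_finite_graph =
  fixes b :: "'x::countable \<Rightarrow> 'x \<Rightarrow> real"
  assumes weighted_graph: "weighted_graph b" and locally_finite: "locally_finite b"
begin

lemma weight_nonneg: "b x y \<ge> 0"
  using weighted_graph by (simp add: weighted_graph_def)

lemma weight_self: "b x x = 0"
  using weighted_graph by (simp add: weighted_graph_def)

lemma weight_sym: "b x y = b y x"
  using weighted_graph by (simp add: weighted_graph_def)

lemma weight_eq_0: "\<not> b x y > 0 \<Longrightarrow> b x y = 0"
  using weight_nonneg[of x y] by simp

lemma finite_neighbours: "finite {y. b x y > 0}"
  using locally_finite by (simp add: locally_finite_def)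

lemma deg_eq_sum: "deg b x = (\<Sum>y\<in>{y. b x y > 0}. b x y)"
proof -
  have "deg b x = (\<Sum>\<^sub>\<infinity>y\<in>{y. b x y > 0}. b x y)"
    unfolding deg_def by (rule infsum_cong_neutral) (auto simp: weight_eq_0)
  then show ?thesis
    using finite_neighbours by simp
qed

definition energy_on :: "'x set \<Rightarrow> ('x \<Rightarrow> real) \<Rightarrow> ('x \<Rightarrow> real) \<Rightarrow> real" where
  "energy_on D V v = (\<Sum>x\<in>D. \<Sum>y\<in>D. b x y * (v x - v y)\<^sup>2) / 2 + (\<Sum>x\<in>D. (v x)\<^sup>2 * V x)"

definition energy_pairing_on :: "'x set \<Rightarrow> ('x \<Rightarrow> real) \<Rightarrow> ('x \<Rightarrow> real) \<Rightarrow> ('x \<Rightarrow> real) \<Rightarrow> real"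
  where "energy_pairing_on D V v w =
    (\<Sum>x\<in>D. \<Sum>y\<in>D. b x y * (v x - v y) * (w x - w y)) / 2 + (\<Sum>x\<in>D. v x * w x * V x)"

lemma energy_on_add_scaled:
  "energy_on D V (\<lambda>x. u x + t * w x)
    = energy_on D V u + 2 * t * energy_pairing_on D V u w + t\<^sup>2 * energy_on D V w"
proof -
  have edge: "b x y * ((u x + t * w x) - (u y + t * w y))\<^sup>2 = b x y * (u x - u y)\<^sup>2
      + 2 * t * (b x y * (u x - u y) * (w x - w y)) + t\<^sup>2 * (b x y * (w x - w y)\<^sup>2)" for x y
    by (simp add: power2_eq_square algebra_simps)
  have vertex: "(u x + t * w x)\<^sup>2 * V x
      = (u x)\<^sup>2 * V x + 2 * t * (u x * w x * V x) + t\<^sup>2 * ((w x)\<^sup>2 * V x)" for x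
    by (simp add: power2_eq_square algebra_simps)
  have double_sum: "(\<Sum>x\<in>D. \<Sum>y\<in>D. f x y + c1 * g x y + c2 * h x y) =
      (\<Sum>x\<in>D. \<Sum>y\<in>D. f x y) + c1 * (\<Sum>x\<in>D. \<Sum>y\<in>D. g x y) + c2 * (\<Sum>x\<in>D. \<Sum>y\<in>D. h x y)"
    for f g h :: "'x \<Rightarrow> 'x \<Rightarrow> real" and c1 c2 :: real
    by (simp add: sum.distrib sum_distrib_left)
  have single_sum: "(\<Sum>x\<in>D. f x + c1 * g x + c2 * h x) =
      (\<Sum>x\<in>D. f x) + c1 * (\<Sum>x\<in>D. g x) + c2 * (\<Sum>x\<in>D. h x)"
    for f g h :: "'x \<Rightarrow> real" and c1 c2 :: real
    by (simp add: sum.distrib sum_distrib_left)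
  show ?thesis
    unfolding energy_on_def energy_pairing_on_def edge vertex double_sum single_sum
    by (simp add: field_simps)
qed

lemma energy_on_eq_local_sums:
  assumes "finite D"
  shows "energy_on D V u = (\<Sum>x\<in>D. (\<Sum>y\<in>D. b x y * ((u x)\<^sup>2 - u x * u y)) + V x * (u x)\<^sup>2)"
proof -
  have edge: "b x y * (u x - u y)\<^sup>2 = b x y * ((u x)\<^sup>2 - u x * u y) + b y x * ((u y)\<^sup>2 - u y * u x)"
    for x y
    by (simp add: weight_sym[of y x] power2_eq_square algebra_simps)
  have "(\<Sum>x\<in>D. \<Sum>y\<in>D. b x y * (u x - u y)\<^sup>2) =
     (\<Sum>x\<in>D. \<Sum>y\<in>D. b x y * ((u x)\<^sup>2 - u x * u y)) + (\<Sum>x\<in>D. \<Sum>y\<in>D. b y x * ((u y)\<^sup>2 - u y * u x))"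
    unfolding edge by (simp add: sum.distrib)
  also have "(\<Sum>x\<in>D. \<Sum>y\<in>D. b y x * ((u y)\<^sup>2 - u y * u x))
      = (\<Sum>x\<in>D. \<Sum>y\<in>D. b x y * ((u x)\<^sup>2 - u x * u y))"
    by (rule sum.swap)
  finally show ?thesis
    unfolding energy_on_def by (simp add: sum.distrib mult.commute)
qed

lemma qform_eq_energy_on:
  assumes "finite D0" "\<And>x. x \<notin> D0 \<Longrightarrow> v x = 0" "D = D0 \<union> (\<Union>x\<in>D0. {y. b x y > 0})"
  shows "qform b V (\<lambda>x. of_real (v x)) = energy_on D V v"
proof -
  have "finite D"
    using assms(1,3) finite_neighbours by simp
  have "(\<Sum>\<^sub>\<infinity>(x, y). b x y * (cmod (complex_of_real (v x) - complex_of_real (v y)))\<^sup>2)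
      = (\<Sum>\<^sub>\<infinity>(x, y)\<in>D \<times> D. b x y * (v x - v y)\<^sup>2)"
  proof (rule infsum_cong_neutral)
    fix p assume "p \<in> UNIV - D \<times> D"
    then obtain x y where p: "p = (x, y)" "(x, y) \<notin> D \<times> D"
      by (cases p) auto
    have "b x y = 0 \<or> (x \<notin> D0 \<and> y \<notin> D0)"
      using p(2) weight_eq_0[of x y] weight_sym[of x y] by (auto simp: assms(3))
    then show "(case p of (x, y) \<Rightarrow> b x y * (cmod (complex_of_real (v x) - of_real (v y)))\<^sup>2) = 0"
      using assms(2) p(1) by auto
  qed (auto simp flip: of_real_diff)
  moreover have "(\<Sum>\<^sub>\<infinity>x. (cmod (complex_of_real (v x)))\<^sup>2 * V x) = (\<Sum>\<^sub>\<infinity>x\<in>D. (v x)\<^sup>2 * V x)"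
    using assms(2,3) by (intro infsum_cong_neutral) auto
  ultimately show ?thesis
    using \<open>finite D\<close> by (simp add: qform_def energy_on_def sum.cartesian_product)
qed

lemma qform_nonpos_of_local_energy:
  assumes "finite S" "\<And>x. x \<notin> S \<Longrightarrow> u x = 0"
    and local_energy: "\<And>x. (\<Sum>y\<in>{y. b x y > 0}. b x y * ((u x)\<^sup>2 - u x * u y)) + V x * (u x)\<^sup>2 \<le> 0"
  shows "qform b V (\<lambda>x. of_real (u x)) \<le> 0"
proof -
  define D where "D = S \<union> (\<Union>x\<in>S. {y. b x y > 0})"
  have "finite D"
    using assms(1) finite_neighbours by (simp add: D_def)
  have "(\<Sum>y\<in>D. b x y * ((u x)\<^sup>2 - u x * u y)) = (\<Sum>y\<in>{y. b x y > 0}. b x y * ((u x)\<^sup>2 - u x * u y))"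
    for x
  proof (cases "x \<in> S")
    case True
    then have "{y. b x y > 0} \<subseteq> D"
      by (auto simp: D_def)
    then show ?thesis
      using \<open>finite D\<close> by (intro sum.mono_neutral_right) (auto simp: weight_eq_0)
  qed (simp add: assms(2))
  then have "qform b V (\<lambda>x. of_real (u x))
      = (\<Sum>x\<in>D. (\<Sum>y\<in>{y. b x y > 0}. b x y * ((u x)\<^sup>2 - u x * u y)) + V x * (u x)\<^sup>2)"
    using qform_eq_energy_on[OF assms(1,2) D_def] energy_on_eq_local_sums[OF \<open>finite D\<close>] by simp
  also have "\<dots> \<le> 0"
    by (rule sum_nonpos) (rule local_energy)
  finally show ?thesis .
qed

lemma energy_pairing_on_point_mass:
  assumes "finite D" "z \<in> D" "u z = 0"
  shows "energy_pairing_on D V u (\<lambda>x. if x = z then 1 else 0) = - (\<Sum>y\<in>D. b z y * u y)"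
proof -
  have edge: "b x y * (u x - u y) * ((if x = z then 1 else 0) - (if y = z then 1 else 0))
      = (if x = z then - b z y * u y else 0) - (if y = z then b x z * u x else 0)" for x y
    using assms(3) by auto
  have "(\<Sum>x\<in>D. \<Sum>y\<in>D. if x = z then - b z y * u y else 0)
      = (\<Sum>x\<in>D. if x = z then \<Sum>y\<in>D. - b z y * u y else 0)"
    by (intro sum.cong refl) auto
  then have from_z: "(\<Sum>x\<in>D. \<Sum>y\<in>D. if x = z then - b z y * u y else 0) = - (\<Sum>y\<in>D. b z y * u y)"
    using assms(1,2) by (simp add: sum_negf)
  have to_z: "(\<Sum>x\<in>D. \<Sum>y\<in>D. if y = z then b x z * u x else 0) = (\<Sum>y\<in>D. b z y * u y)"
    using assms(1,2) by (simp add: sum.delta weight_sym[of _ z])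
  have "(\<Sum>x\<in>D. u x * (if x = z then 1 else 0) * V x) = 0"
    using assms(3) by (intro sum.neutral) simp
  then show ?thesis
    unfolding energy_pairing_on_def edge sum_subtractf from_z to_z by simp
qed

text \<open>\<open>u\<close> minimises \<open>q\<^sub>V\<close>, so adding a small multiple of the point mass at a zero \<open>z\<close>
  of \<open>u\<close> cannot lower the energy to first order; the first-order term is
  \<open>-2 \<Sum>\<^sub>y b(z,y) u(y)\<close>.\<close>
lemma ground_state_vanishes_next_to_zero:
  assumes nonneg: "qform_nonneg b V"
    and "finite S" "\<And>x. x \<notin> S \<Longrightarrow> u x = 0" "\<And>x. u x \<ge> 0"
    and nonpos: "qform b V (\<lambda>x. of_real (u x)) \<le> 0"
    and "u z = 0" "b z y > 0"
  shows "u y = 0"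
proof -
  define D0 where "D0 = insert z S"
  define D where "D = D0 \<union> (\<Union>x\<in>D0. {y. b x y > 0})"
  define \<delta> where "\<delta> = (\<lambda>x. if x = z then 1 else (0::real))"
  have "finite D0" "finite D"
    using assms(2) finite_neighbours by (simp_all add: D_def D0_def)
  have "z \<in> D" "y \<in> D"
    using assms(7) by (auto simp: D_def D0_def)
  define P where "P = (\<Sum>y\<in>D. b z y * u y)"
  have "0 \<le> energy_on D V u + (- 2 * P) * t + energy_on D V \<delta> * t\<^sup>2" for t
  proof -
    have zero_outside: "\<And>x. x \<notin> D0 \<Longrightarrow> u x + t * \<delta> x = 0"
      using assms(3) by (auto simp: \<delta>_def D0_def)
    then have "{x. complex_of_real (u x + t * \<delta> x) \<noteq> 0} \<subseteq> D0"
      by (metis (mono_tags) mem_Collect_eq of_real_0 subsetI)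
    then have "finite {x. complex_of_real (u x + t * \<delta> x) \<noteq> 0}"
      using \<open>finite D0\<close> by (rule finite_subset)
    then have "0 \<le> qform b V (\<lambda>x. of_real (u x + t * \<delta> x))"
      using nonneg by (simp add: qform_nonneg_def)
    also have "\<dots> = energy_on D V (\<lambda>x. u x + t * \<delta> x)"
      by (rule qform_eq_energy_on[OF \<open>finite D0\<close> zero_outside D_def])
    finally show ?thesis
      using energy_pairing_on_point_mass[of D z u V] \<open>finite D\<close> \<open>z \<in> D\<close> \<open>u z = 0\<close>
      by (simp add: energy_on_add_scaled \<delta>_def P_def mult.commute)
  qed
  moreover have "energy_on D V u \<le> 0"
    using nonpos qform_eq_energy_on[of D0 u D V] assms(3) \<open>finite D0\<close> by (simp add: D_def D0_def)
  ultimately have "P = 0"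
    using quadratic_nonneg_imp_linear_coeff_zero by fastforce
  then have "b z y * u y = 0"
    using \<open>finite D\<close> \<open>y \<in> D\<close> weight_nonneg assms(4) unfolding P_def
    by (subst (asm) sum_nonneg_eq_0_iff) auto
  then show ?thesis
    using assms(7) by simp
qed

end

section \<open>The magnetic operator as a scalar kernel\<close>

text \<open>Pairs \<open>(x, i)\<close> with \<open>i < d x\<close> index the fibres; the padding indices \<open>i \<ge> d x\<close>
  carry the identity, which keeps the kernel Hermitian and injective.\<close>
definition flat_kernel :: "('x \<Rightarrow> 'x \<Rightarrow> real) \<Rightarrow> ('x \<Rightarrow> nat) \<Rightarrow> ('x \<Rightarrow> 'x \<Rightarrow> complex mat)
    \<Rightarrow> ('x \<Rightarrow> complex mat) \<Rightarrow> 'x \<times> nat \<Rightarrow> 'x \<times> nat \<Rightarrow> complex" where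
  "flat_kernel b d \<Phi> W = (\<lambda>(x, i) (y, j).
    if i < d x \<and> j < d y then
      (if x = y then (if i = j then of_real (deg b x) else 0) + W x $$ (i, j) else 0)
      - (if b x y > 0 then of_real (b x y) * \<Phi> x y $$ (i, j) else 0)
    else if x = y \<and> i = j then 1 else 0)"

lemma flat_kernel_apply: "flat_kernel b d \<Phi> W (x, i) (y, j) =
    (if i < d x \<and> j < d y then
      (if x = y then (if i = j then of_real (deg b x) else 0) + W x $$ (i, j) else 0)
      - (if b x y > 0 then of_real (b x y) * \<Phi> x y $$ (i, j) else 0)
    else if x = y \<and> i = j then 1 else 0)"
  by (simp add: flat_kernel_def)

definition section_of :: "('x \<Rightarrow> nat) \<Rightarrow> ('x \<times> nat \<Rightarrow> complex) \<Rightarrow> 'x \<Rightarrow> complex vec" where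
  "section_of d F x = vec (d x) (\<lambda>i. F (x, i))"

lemma section_of_carrier: "section_of d F x \<in> carrier_vec (d x)"
  by (simp add: section_of_def)

lemma index_section_of: "i < d x \<Longrightarrow> section_of d F x $ i = F (x, i)"
  by (simp add: section_of_def)

definition pointwise_norm :: "('x \<Rightarrow> complex vec) \<Rightarrow> 'x \<Rightarrow> real" where
  "pointwise_norm f x = sqrt (vec_sq_norm (f x))"

lemma pointwise_norm_nonneg: "pointwise_norm f x \<ge> 0"
  by (simp add: pointwise_norm_def vec_sq_norm_nonneg)

lemma pointwise_norm_sq: "(pointwise_norm f x)\<^sup>2 = vec_sq_norm (f x)"
  using vec_sq_norm_nonneg[of "f x"] by (simp add: pointwise_norm_def)

locale magnetic_bundle = locally_finite_graph b for b :: "'x::countable \<Rightarrow> 'x \<Rightarrow> real" +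
  fixes d :: "'x \<Rightarrow> nat" and \<Phi> :: "'x \<Rightarrow> 'x \<Rightarrow> complex mat" and W :: "'x \<Rightarrow> complex mat"
  assumes dim_pos: "\<And>x. d x > 0"
    and connection: "connection b d \<Phi>"
    and selfadjoint: "selfadjoint_endo d W"
begin

abbreviation K :: "'x \<times> nat \<Rightarrow> 'x \<times> nat \<Rightarrow> complex" where
  "K \<equiv> flat_kernel b d \<Phi> W"

abbreviation M :: "('x \<Rightarrow> complex vec) \<Rightarrow> 'x \<Rightarrow> complex vec" where
  "M \<equiv> magnetic_op b d \<Phi> W"

lemma W_carrier: "W x \<in> carrier_mat (d x) (d x)"
  using selfadjoint by (simp add: selfadjoint_endo_def)

lemma W_adjoint: "mat_adjoint (W x) = W x"
  using selfadjoint by (simp add: selfadjoint_endo_def)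

lemma \<Phi>_carrier: "b x y > 0 \<Longrightarrow> \<Phi> x y \<in> carrier_mat (d x) (d y)"
  using connection by (simp add: connection_def unitary_map_def)

lemma \<Phi>_unitary: "b x y > 0 \<Longrightarrow> mat_adjoint (\<Phi> x y) * \<Phi> x y = 1\<^sub>m (d y)"
  using connection by (simp add: connection_def unitary_map_def)

lemma \<Phi>_swap_eq_adjoint:
  assumes "b x y > 0"
  shows "\<Phi> y x = mat_adjoint (\<Phi> x y)"
proof -
  have carriers: "\<Phi> x y \<in> carrier_mat (d x) (d y)" "\<Phi> y x \<in> carrier_mat (d y) (d x)"
    "mat_adjoint (\<Phi> x y) \<in> carrier_mat (d y) (d x)"
    using assms weight_sym[of x y] \<Phi>_carrier mat_adjoint_carrier[OF \<Phi>_carrier[OF assms]] by auto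
  have "\<Phi> y x = \<Phi> y x * (\<Phi> x y * mat_adjoint (\<Phi> x y))"
    using connection assms carriers by (simp add: connection_def unitary_map_def)
  also have "\<dots> = (\<Phi> y x * \<Phi> x y) * mat_adjoint (\<Phi> x y)"
    using carriers by simp
  also have "\<dots> = mat_adjoint (\<Phi> x y)"
    using connection assms carriers by (simp add: connection_def)
  finally show ?thesis .
qed

lemma \<Phi>_swap_index:
  "b x y > 0 \<Longrightarrow> i < d x \<Longrightarrow> j < d y \<Longrightarrow> \<Phi> y x $$ (j, i) = cnj (\<Phi> x y $$ (i, j))"
  using \<Phi>_swap_eq_adjoint index_mat_adjoint[OF \<Phi>_carrier] by simp

lemma finite_kernel_supp_flat: "finite (kernel_supp K p)"
proof -
  obtain x i where p: "p = (x, i)"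
    by (cases p)
  have "kernel_supp K p \<subseteq> insert (x, i) (Sigma (insert x {y. b x y > 0}) (\<lambda>y. {..<d y}))"
    unfolding kernel_supp_def p by (auto simp: flat_kernel_apply split: if_splits)
  moreover have "finite (Sigma (insert x {y. b x y > 0}) (\<lambda>y. {..<d y}))"
    using finite_neighbours by (intro finite_SigmaI) auto
  ultimately show ?thesis
    by (meson finite_insert finite_subset)
qed

lemma flat_kernel_hermitian: "K q p = cnj (K p q)"
proof -
  obtain x i y j where pq: "p = (x, i)" "q = (y, j)"
    by (cases p, cases q)
  consider "\<not> (i < d x \<and> j < d y)" | "i < d x" "j < d y" "x = y"
    | "i < d x" "j < d y" "x \<noteq> y" "b x y > 0" | "i < d x" "j < d y" "x \<noteq> y" "\<not> b x y > 0"
    by blast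
  then show ?thesis
  proof cases
    case 2
    then show ?thesis
      using hermitian_mat_index[OF W_carrier W_adjoint, of i x j] weight_self
      by (auto simp: pq flat_kernel_apply)
  next
    case 3
    then show ?thesis
      using \<Phi>_swap_index[of x y i j] weight_sym[of x y] by (auto simp: pq flat_kernel_apply)
  qed (auto simp: pq flat_kernel_apply weight_sym[of x y])
qed

lemma kernel_apply_flat_padding:
  assumes "\<not> i < d x"
  shows "kernel_apply K F (x, i) = F (x, i)"
proof -
  have "kernel_apply K F (x, i) = (\<Sum>q\<in>{(x, i)}. K (x, i) q * F q)"
    using assms
    by (intro kernel_apply_eq_sum) (auto simp: kernel_supp_def flat_kernel_apply split: if_splits)
  then show ?thesis
    using assms by (simp add: flat_kernel_apply)
qed

lemma magnetic_op_carrier: "M f x \<in> carrier_vec (d x)"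
proof (rule carrier_vecI)
  have "dim_row (W x) = d x"
    using W_carrier[of x] by blast
  then show "dim_vec (M f x) = d x"
    by (simp add: magnetic_op_def)
qed

lemma index_magnetic_op:
  "i < d x \<Longrightarrow> M f x $ i =
    (\<Sum>y\<in>{y. b x y > 0}. of_real (b x y) * (f x $ i - (\<Phi> x y *\<^sub>v f y) $ i)) + (W x *\<^sub>v f x) $ i"
  using W_carrier[of x] by (simp add: magnetic_op_def del: index_mult_mat_vec)

lemma index_magnetic_op_expand:
  assumes sections: "\<And>y. f y \<in> carrier_vec (d y)" and "i < d x"
  shows "M f x $ i = of_real (deg b x) * f x $ i + (\<Sum>j<d x. W x $$ (i, j) * f x $ j)
    - (\<Sum>y\<in>{y. b x y > 0}. \<Sum>j<d y. of_real (b x y) * \<Phi> x y $$ (i, j) * f y $ j)"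
proof -
  have "(\<Phi> x y *\<^sub>v f y) $ i = (\<Sum>j<d y. \<Phi> x y $$ (i, j) * f y $ j)" if "b x y > 0" for y
    using index_mult_mat_vec_sum[OF \<Phi>_carrier[OF that] sections assms(2)] .
  moreover have "(W x *\<^sub>v f x) $ i = (\<Sum>j<d x. W x $$ (i, j) * f x $ j)"
    using index_mult_mat_vec_sum[OF W_carrier sections assms(2)] .
  moreover have "(\<Sum>y\<in>{y. b x y > 0}. of_real (b x y) * f x $ i) = of_real (deg b x) * f x $ i"
    by (simp add: deg_eq_sum sum_distrib_right)
  ultimately show ?thesis
    using assms(2)
    by (simp add: index_magnetic_op right_diff_distrib sum_subtractf sum_distrib_left mult.assoc)
qed

lemma kernel_apply_flat:
  assumes "i < d x"
  shows "kernel_apply K F (x, i) = of_real (deg b x) * F (x, i) + (\<Sum>j<d x. W x $$ (i, j) * F (x, j))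
    - (\<Sum>y\<in>{y. b x y > 0}. \<Sum>j<d y. of_real (b x y) * \<Phi> x y $$ (i, j) * F (y, j))"
proof -
  define Y where "Y = {y. b x y > 0}"
  have "finite Y" "x \<notin> Y"
    using finite_neighbours weight_self by (simp_all add: Y_def)
  have "kernel_apply K F (x, i) = (\<Sum>q\<in>Sigma (insert x Y) (\<lambda>y. {..<d y}). K (x, i) q * F q)"
    using \<open>finite Y\<close> assms
    by (intro kernel_apply_eq_sum) (auto simp: kernel_supp_def Y_def flat_kernel_apply split: if_splits)
  also have "\<dots> = (\<Sum>y\<in>insert x Y. \<Sum>j<d y. K (x, i) (y, j) * F (y, j))"
    using \<open>finite Y\<close> by (subst sum.Sigma) auto
  also have "\<dots> = (\<Sum>j<d x. K (x, i) (x, j) * F (x, j)) + (\<Sum>y\<in>Y. \<Sum>j<d y. K (x, i) (y, j) * F (y, j))"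
    using \<open>finite Y\<close> \<open>x \<notin> Y\<close> by simp
  also have "(\<Sum>j<d x. K (x, i) (x, j) * F (x, j))
      = (\<Sum>j<d x. (if i = j then of_real (deg b x) * F (x, j) else 0) + W x $$ (i, j) * F (x, j))"
    using assms weight_self by (intro sum.cong refl) (auto simp: flat_kernel_apply ring_distribs)
  also have "\<dots> = of_real (deg b x) * F (x, i) + (\<Sum>j<d x. W x $$ (i, j) * F (x, j))"
    using assms by (simp add: sum.distrib)
  also have "(\<Sum>y\<in>Y. \<Sum>j<d y. K (x, i) (y, j) * F (y, j))
      = (\<Sum>y\<in>Y. \<Sum>j<d y. - (of_real (b x y) * \<Phi> x y $$ (i, j) * F (y, j)))"
  proof (intro sum.cong refl)
    fix y j assume "y \<in> Y" "j \<in> {..<d y}"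
    then have "y \<noteq> x" "b x y > 0" "j < d y"
      using \<open>x \<notin> Y\<close> by (auto simp: Y_def)
    then show "K (x, i) (y, j) * F (y, j) = - (of_real (b x y) * \<Phi> x y $$ (i, j) * F (y, j))"
      using assms by (simp add: flat_kernel_apply)
  qed
  also have "\<dots> = - (\<Sum>y\<in>Y. \<Sum>j<d y. of_real (b x y) * \<Phi> x y $$ (i, j) * F (y, j))"
    by (simp add: sum_negf)
  finally show ?thesis
    by (simp add: Y_def)
qed

lemma magnetic_op_section_of:
  "i < d x \<Longrightarrow> M (section_of d F) x $ i = kernel_apply K F (x, i)"
  by (simp add: index_magnetic_op_expand section_of_carrier kernel_apply_flat index_section_of)

lemma magnetic_op_cscalar_prod:
  assumes sections: "\<And>y. f y \<in> carrier_vec (d y)"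
  shows "M f x \<bullet>c f x = (\<Sum>y\<in>{y. b x y > 0}. of_real (b x y) * (f x \<bullet>c f x - (\<Phi> x y *\<^sub>v f y) \<bullet>c f x))
    + (W x *\<^sub>v f x) \<bullet>c f x"
proof -
  define Y where "Y = {y. b x y > 0}"
  have dim: "dim_vec (f x) = d x"
    using sections[of x] by simp
  have "M f x \<bullet>c f x = (\<Sum>i<d x. ((\<Sum>y\<in>Y. of_real (b x y) * (f x $ i - (\<Phi> x y *\<^sub>v f y) $ i))
      + (W x *\<^sub>v f x) $ i) * cnj (f x $ i))"
    unfolding cscalar_prod_eq_sum[OF dim] Y_def by (intro sum.cong refl) (simp add: index_magnetic_op)
  also have "\<dots> = (\<Sum>y\<in>Y. of_real (b x y) * ((\<Sum>i<d x. f x $ i * cnj (f x $ i))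
      - (\<Sum>i<d x. (\<Phi> x y *\<^sub>v f y) $ i * cnj (f x $ i)))) + (\<Sum>i<d x. (W x *\<^sub>v f x) $ i * cnj (f x $ i))"
    by (simp add: sum.distrib sum_distrib_right sum_distrib_left sum_subtractf ring_distribs
        mult.assoc sum.swap[of _ "{..<d x}"] del: index_mult_mat_vec)
  finally show ?thesis
    by (simp add: cscalar_prod_eq_sum[OF dim] Y_def del: index_mult_mat_vec)
qed

lemma magnetic_op_zero_balance:
  assumes sections: "\<And>y. f y \<in> carrier_vec (d y)" and "M f x = 0\<^sub>v (d x)"
  shows "(\<Sum>y\<in>{y. b x y > 0}. b x y * ((pointwise_norm f x)\<^sup>2 - Re ((\<Phi> x y *\<^sub>v f y) \<bullet>c f x)))
    + Re ((W x *\<^sub>v f x) \<bullet>c f x) = 0"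
proof -
  have "0 = Re (M f x \<bullet>c f x)"
    using assms(2) sections[of x] by simp
  also have "\<dots> = (\<Sum>y\<in>{y. b x y > 0}. b x y * ((pointwise_norm f x)\<^sup>2 - Re ((\<Phi> x y *\<^sub>v f y) \<bullet>c f x)))
    + Re ((W x *\<^sub>v f x) \<bullet>c f x)"
    by (simp add: magnetic_op_cscalar_prod[OF sections] Re_sum cscalar_prod_self pointwise_norm_sq)
  finally show ?thesis
    by simp
qed

lemma connection_cscalar_prod_bound:
  assumes sections: "\<And>y. f y \<in> carrier_vec (d y)" and "b x y > 0"
  shows "\<bar>Re ((\<Phi> x y *\<^sub>v f y) \<bullet>c f x)\<bar> \<le> pointwise_norm f x * pointwise_norm f y"
proof -
  have "dim_vec (\<Phi> x y *\<^sub>v f y) = dim_vec (f x)"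
    using \<Phi>_carrier[OF assms(2)] sections[of x] by simp
  have "\<bar>Re ((\<Phi> x y *\<^sub>v f y) \<bullet>c f x)\<bar> \<le> cmod ((\<Phi> x y *\<^sub>v f y) \<bullet>c f x)"
    by (rule abs_Re_le_cmod)
  also have "\<dots> \<le> sqrt (vec_sq_norm (\<Phi> x y *\<^sub>v f y)) * sqrt (vec_sq_norm (f x))"
    by (rule cscalar_prod_norm_le) fact
  also have "vec_sq_norm (\<Phi> x y *\<^sub>v f y) = vec_sq_norm (f y)"
    by (rule unitary_vec_sq_norm[OF \<Phi>_carrier[OF assms(2)] \<Phi>_unitary[OF assms(2)] sections])
  finally show ?thesis
    by (simp add: pointwise_norm_def mult.commute)
qed

end

section \<open>Injectivity on finitely supported sections and surjectivity\<close>

context magnetic_bundle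
begin

lemma local_energy_Wmin_nonpos:
  assumes sections: "\<And>y. f y \<in> carrier_vec (d y)" and zero: "M f x = 0\<^sub>v (d x)"
  shows "(\<Sum>y\<in>{y. b x y > 0}. b x y * ((pointwise_norm f x)\<^sup>2 - pointwise_norm f x * pointwise_norm f y))
    + Wmin W x * (pointwise_norm f x)\<^sup>2 \<le> 0"
proof -
  let ?u = "pointwise_norm f"
  have "Wmin W x * (?u x)\<^sup>2 \<le> Re ((W x *\<^sub>v f x) \<bullet>c f x)"
    using hermitian_Min_eigenvalue_le[OF W_carrier W_adjoint dim_pos sections]
    by (simp add: Wmin_def pointwise_norm_sq)
  moreover have "(\<Sum>y\<in>{y. b x y > 0}. b x y * ((?u x)\<^sup>2 - ?u x * ?u y))
      \<le> (\<Sum>y\<in>{y. b x y > 0}. b x y * ((?u x)\<^sup>2 - Re ((\<Phi> x y *\<^sub>v f y) \<bullet>c f x)))"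
  proof (rule sum_mono)
    fix y assume "y \<in> {y. b x y > 0}"
    then have "Re ((\<Phi> x y *\<^sub>v f y) \<bullet>c f x) \<le> ?u x * ?u y"
      using connection_cscalar_prod_bound[OF sections, of x y] by simp
    then show "b x y * ((?u x)\<^sup>2 - ?u x * ?u y) \<le> b x y * ((?u x)\<^sup>2 - Re ((\<Phi> x y *\<^sub>v f y) \<bullet>c f x))"
      by (intro mult_left_mono) (auto simp: weight_nonneg)
  qed
  ultimately show ?thesis
    using magnetic_op_zero_balance[OF sections zero] by linarith
qed

lemma local_energy_Wmax_nonpos:
  assumes sections: "\<And>y. f y \<in> carrier_vec (d y)" and zero: "M f x = 0\<^sub>v (d x)"
  shows "(\<Sum>y\<in>{y. b x y > 0}. b x y * ((pointwise_norm f x)\<^sup>2 - pointwise_norm f x * pointwise_norm f y))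
    + (- Wmax W x - 2 * deg b x) * (pointwise_norm f x)\<^sup>2 \<le> 0"
proof -
  let ?u = "pointwise_norm f" and ?N = "{y. b x y > 0}"
  have "Re ((W x *\<^sub>v f x) \<bullet>c f x) \<le> Wmax W x * (?u x)\<^sup>2"
    using hermitian_Max_eigenvalue_ge[OF W_carrier W_adjoint dim_pos sections]
    by (simp add: Wmax_def pointwise_norm_sq)
  moreover have "(\<Sum>y\<in>?N. b x y * ((?u x)\<^sup>2 - Re ((\<Phi> x y *\<^sub>v f y) \<bullet>c f x)))
      \<le> (\<Sum>y\<in>?N. b x y * ((?u x)\<^sup>2 + ?u x * ?u y))"
  proof (rule sum_mono)
    fix y assume "y \<in> ?N"
    then have "- Re ((\<Phi> x y *\<^sub>v f y) \<bullet>c f x) \<le> ?u x * ?u y"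
      using connection_cscalar_prod_bound[OF sections, of x y] by simp
    then show "b x y * ((?u x)\<^sup>2 - Re ((\<Phi> x y *\<^sub>v f y) \<bullet>c f x)) \<le> b x y * ((?u x)\<^sup>2 + ?u x * ?u y)"
      by (intro mult_left_mono) (auto simp: weight_nonneg)
  qed
  moreover have "2 * deg b x * (?u x)\<^sup>2 = (\<Sum>y\<in>?N. 2 * b x y * (?u x)\<^sup>2)"
    by (simp add: deg_eq_sum sum_distrib_left sum_distrib_right mult.assoc)
  moreover have "(\<Sum>y\<in>?N. b x y * ((?u x)\<^sup>2 - ?u x * ?u y))
      = (\<Sum>y\<in>?N. 2 * b x y * (?u x)\<^sup>2) - (\<Sum>y\<in>?N. b x y * ((?u x)\<^sup>2 + ?u x * ?u y))"
    unfolding sum_subtractf[symmetric] by (intro sum.cong refl) (simp add: algebra_simps)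
  ultimately show ?thesis
    using magnetic_op_zero_balance[OF sections zero] by (simp add: algebra_simps)
qed

lemma magnetic_op_finite_support_kernel:
  assumes infinite: "\<And>x. infinite (component b x)"
    and qform: "qform_nonneg b (Wmin W) \<or> qform_nonneg b (\<lambda>x. - Wmax W x - 2 * deg b x)"
    and sections: "\<And>x. f x \<in> carrier_vec (d x)" and finite: "finite {x. f x \<noteq> 0\<^sub>v (d x)}"
    and zero: "\<And>x. M f x = 0\<^sub>v (d x)"
  shows "f x = 0\<^sub>v (d x)"
proof (rule ccontr)
  define S where "S = {x. f x \<noteq> 0\<^sub>v (d x)}"
  let ?u = "pointwise_norm f"
  assume "f x \<noteq> 0\<^sub>v (d x)"
  then obtain y z where "y \<in> S" "z \<notin> S" "b z y > 0"
    using exit_edge_of_finite_set[of S x b] finite infinite weight_sym by (fastforce simp: S_def)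
  have "finite S"
    using finite by (simp add: S_def)
  have u_zero: "?u w = 0" if "w \<notin> S" for w
    using that by (simp add: S_def pointwise_norm_def vec_sq_norm_def)
  obtain V where "qform_nonneg b V"
    and local_energy: "\<And>w. (\<Sum>v\<in>{v. b w v > 0}. b w v * ((?u w)\<^sup>2 - ?u w * ?u v))
      + V w * (?u w)\<^sup>2 \<le> 0"
    using qform local_energy_Wmin_nonpos[OF sections zero] local_energy_Wmax_nonpos[OF sections zero]
    by blast
  have nonpos: "qform b V (\<lambda>w. of_real (?u w)) \<le> 0"
    using \<open>finite S\<close> u_zero local_energy by (rule qform_nonpos_of_local_energy)
  have "?u y = 0"
    using ground_state_vanishes_next_to_zero[of V S ?u z y, OF \<open>qform_nonneg b V\<close> \<open>finite S\<close>
        u_zero pointwise_norm_nonneg nonpos u_zero[OF \<open>z \<notin> S\<close>] \<open>b z y > 0\<close>] .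
  then have "vec_sq_norm (f y) = 0"
    using pointwise_norm_sq[of f y] by simp
  then show False
    using vec_sq_norm_eq_0D[OF sections] \<open>y \<in> S\<close> by (simp add: S_def)
qed

lemma hermitian_kernel_flat:
  assumes "\<And>x. infinite (component b x)"
    and "qform_nonneg b (Wmin W) \<or> qform_nonneg b (\<lambda>x. - Wmax W x - 2 * deg b x)"
  shows "hermitian_kernel K"
proof
  show "finite (kernel_supp K p)" for p
    by (rule finite_kernel_supp_flat)
  show "K q p = cnj (K p q)" for p q
    by (rule flat_kernel_hermitian)
next
  fix F assume finite: "finite {p. F p \<noteq> 0}" and zero: "kernel_apply K F = 0"
  have kernel: "M (section_of d F) x = 0\<^sub>v (d x)" for x
    using magnetic_op_carrier magnetic_op_section_of zero by (intro eq_vecI) auto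
  have "{x. section_of d F x \<noteq> 0\<^sub>v (d x)} \<subseteq> fst ` {p. F p \<noteq> 0}"
    by (force simp: section_of_def vec_eq_iff)
  then have "finite {x. section_of d F x \<noteq> 0\<^sub>v (d x)}"
    using finite by (meson finite_imageI finite_subset)
  then have "section_of d F x = 0\<^sub>v (d x)" for x
    by (rule magnetic_op_finite_support_kernel[OF assms section_of_carrier _ kernel])
  then have "F (x, i) = 0" for x i
    using kernel_apply_flat_padding[of i x F] zero index_section_of[of i d x F]
    by (cases "i < d x") auto
  then show "F = 0"
    by (auto simp: fun_eq_iff)
qed

lemma magnetic_op_surjective:
  assumes "\<And>x. infinite (component b x)"
    and "qform_nonneg b (Wmin W) \<or> qform_nonneg b (\<lambda>x. - Wmax W x - 2 * deg b x)"
    and "g \<in> sections d"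
  shows "\<exists>f\<in>sections d. M f = g"
proof -
  interpret hermitian_kernel K
    by (rule hermitian_kernel_flat[OF assms(1,2)])
  obtain F where F: "kernel_apply K F = (\<lambda>(x, i). if i < d x then g x $ i else 0)"
    using kernel_apply_surjective by blast
  have "M (section_of d F) x = g x" for x
  proof (rule eq_vecI)
    have "g x \<in> carrier_vec (d x)"
      using assms(3) by (simp add: sections_def)
    then show "dim_vec (M (section_of d F) x) = dim_vec (g x)"
      using magnetic_op_carrier by (simp add: carrier_vecD)
    fix i assume "i < dim_vec (g x)"
    then show "M (section_of d F) x $ i = g x $ i"
      using \<open>g x \<in> carrier_vec (d x)\<close> magnetic_op_section_of F by simp
  qed
  then have "M (section_of d F) = g"
    by blast
  moreover have "section_of d F \<in> sections d"
    by (simp add: sections_def section_of_carrier)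
  ultimately show ?thesis
    by blast
qed

end

theorem theorem2p3:
  fixes b :: "'x::countable \<Rightarrow> 'x \<Rightarrow> real"
    and d :: "'x \<Rightarrow> nat"
    and \<Phi> :: "'x \<Rightarrow> 'x \<Rightarrow> complex mat"
    and W :: "'x \<Rightarrow> complex mat"
  assumes "weighted_graph b"
    and "\<And>x. d x > 0"
    and "connection b d \<Phi>"
    and "selfadjoint_endo d W"
    and "locally_finite b"
    and "\<And>x. infinite (component b x)"
    and "qform_nonneg b (Wmin W) \<or> qform_nonneg b (\<lambda>x. - Wmax W x - 2 * deg b x)"
  shows "\<forall>g\<in>sections d. \<exists>f\<in>sections d. magnetic_op b d \<Phi> W f = g"
proof -
  interpret magnetic_bundle b d \<Phi> W
    by unfold_locales (use assms in auto)
  show ?thesis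
    using magnetic_op_surjective[OF assms(6,7)] by blast
qed

end
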